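(* Let $\mathbb{C}$ be an isostable squares category. For every $n\ge0$, the forgetful functor $U_n:S^{\square}_n\mathbb{C}\to\mathcal{V}_n\mathbb{C}$, sending an object $(A_{jk})$ to its rightmost column $A_{0n}\twoheadrightarrow A_{1n}\twoheadrightarrow\cdots\twoheadrightarrow A_{n-1,n}\twoheadrightarrow A_{nn}=O$, is an equivalence of categories.
   Context: A squares category is a flat double category (squares uniquely determined by their boundary; we say a boundary "is a square") with a distinguished object $O$ initial in the horizontal category $\mathcal{H}_{\mathbb{C}}$ (morphisms $\rightarrowtail$) and terminal in the vertical category $\mathcal{V}_{\mathbb{C}}$ (morphisms $\twoheadrightarrow$). A vertical $f:A\twoheadrightarrow B$ is a vertical weak equivalence if the boundary (top $O\rightarrowtail A$, left $\mathrm{id}_O$, right $f$, bottom $O\rightarrowtail B$) is a square; a horizontal $g:A\rightarrowtail B$ is a horizontal weak equivalence if the boundary (top $g$, left $A\twoheadrightarrow O$, right $B\twoheadrightarrow O$, bottom $\mathrm{id}_O$) is a square. Vertical natural transformations between double functors of flat double categories: vertical components $\tau_A$ with $(Ff,\tau_A,\tau_{A'},Gf)$ a square for each horizontal $f$ and commuting naturality squares in the vertical category; $\mathrm{Fun}^v$ is the functor category. With $\boxdot$ the flat double category generated by one square (corners $a,b,c,d$, horizontal $a\rightarrowtail b,c\rightarrowtail d$, vertical $a\twoheadrightarrow c,b\twoheadrightarrow d$), $i:\mathrm{span}\hookrightarrow\boxdot$ on $a\rightarrowtail b,a\twoheadrightarrow c$ and $j:\mathrm{cospan}\hookrightarrow\boxdot$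 on $b\twoheadrightarrow d,c\rightarrowtail d$: a squares category is stable if (i) $i^*$ on $\mathrm{Fun}^v(-,\mathbb{C})$ has a section functor $s$, (ii) there is a natural transformation $w:si^*\Rightarrow\mathrm{id}$ with components the identity at $a,b,c$, (iii) $j^*$ has a section functor $t$, (iv) there is a natural transformation $u:tj^*\Rightarrow\mathrm{id}$ with components the identity at $b,c,d$ and a vertical weak equivalence at $a$. It is isostable if it is stable, its weak equivalences are invertible, and for every boundary with top $f:A\rightarrowtail B$, bottom $k:C\rightarrowtail D$ and vertical isomorphisms $g:A\twoheadrightarrow C$, $h:B\twoheadrightarrow D$, this boundary is a square iff the boundary with top $k$, left $g^{-1}$, right $h^{-1}$, bottom $f$ is a square. $S^{\square}_n\mathbb{C}$: objects are families $(A_{jk})_{0\le j\le k\le n}$ with $A_{jj}=O$, horizontal $A_{jk}\rightarrowtail A_{j,k+1}$, vertical $A_{jk}\twoheadrightarrow A_{j+1,k}$, each unit cell ($j<k<n$) a square; morphisms are families of vertical morphisms $A_{jk}\twoheadrightarrow A'_{jk}$ such that every cell formed with a horizontal generator is a square and every cell formed with a vertical generator commutes in $\mathcal{V}_{\mathbb{C}}$ (their components are vertical weak equivalences). $\mathcal{V}_n\mathbb{C}$ is the category whose objects are sequences $A_1\twoheadrightarrow\cdots\twoheadrightarrow A_n\twoheadrightarrow O$ of vertical morphisms and whose morphisms are families of vertical weak equivalences $A_i\twoheadrightarrow A_i'$ making all the resulting squares commute in $\mathcal{V}_{\mathbb{C}}$. *)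

theory Defs
  imports Main
begin

record ('x, 'm) cat =
  Ob  :: "'x set"
  Hom :: "'x \<Rightarrow> 'x \<Rightarrow> 'm set"
  Cmp :: "'m \<Rightarrow> 'm \<Rightarrow> 'm"   (* Cmp g f = g after f *)
  Id  :: "'x \<Rightarrow> 'm"

definition is_functor ::
  "('x, 'm) cat \<Rightarrow> ('y, 'n) cat \<Rightarrow> ('x \<Rightarrow> 'y) \<Rightarrow> ('x \<Rightarrow> 'x \<Rightarrow> 'm \<Rightarrow> 'n) \<Rightarrow> bool" where
  "is_functor C D Fo Fm \<longleftrightarrow>
     (\<forall>X\<in>Ob C. Fo X \<in> Ob D) \<and>
     (\<forall>X\<in>Ob C. \<forall>Y\<in>Ob C. \<forall>f\<in>Hom C X Y. Fm X Y f \<in> Hom D (Fo X) (Fo Y)) \<and>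
     (\<forall>X\<in>Ob C. Fm X X (Id C X) = Id D (Fo X)) \<and>
     (\<forall>X\<in>Ob C. \<forall>Y\<in>Ob C. \<forall>Z\<in>Ob C. \<forall>f\<in>Hom C X Y. \<forall>g\<in>Hom C Y Z.
        Fm X Z (Cmp C g f) = Cmp D (Fm Y Z g) (Fm X Y f))"

definition is_nat_trans ::
  "('x, 'm) cat \<Rightarrow> ('y, 'n) cat \<Rightarrow> ('x \<Rightarrow> 'y) \<Rightarrow> ('x \<Rightarrow> 'x \<Rightarrow> 'm \<Rightarrow> 'n)
     \<Rightarrow> ('x \<Rightarrow> 'y) \<Rightarrow> ('x \<Rightarrow> 'x \<Rightarrow> 'm \<Rightarrow> 'n) \<Rightarrow> ('x \<Rightarrow> 'n) \<Rightarrow> bool" where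
  "is_nat_trans C D Fo Fm Go Gm \<eta> \<longleftrightarrow>
     (\<forall>X\<in>Ob C. \<eta> X \<in> Hom D (Fo X) (Go X)) \<and>
     (\<forall>X\<in>Ob C. \<forall>Y\<in>Ob C. \<forall>f\<in>Hom C X Y.
        Cmp D (\<eta> Y) (Fm X Y f) = Cmp D (Gm X Y f) (\<eta> X))"

definition is_iso :: "('x, 'm) cat \<Rightarrow> 'x \<Rightarrow> 'x \<Rightarrow> 'm \<Rightarrow> bool" where
  "is_iso C X Y f \<longleftrightarrow> f \<in> Hom C X Y \<and>
     (\<exists>g\<in>Hom C Y X. Cmp C g f = Id C X \<and> Cmp C f g = Id C Y)"

definition is_equivalence ::
  "('x, 'm) cat \<Rightarrow> ('y, 'n) cat \<Rightarrow> ('x \<Rightarrow> 'y) \<Rightarrow> ('x \<Rightarrow> 'x \<Rightarrow> 'm \<Rightarrow> 'n) \<Rightarrow> bool" where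
  "is_equivalence C D Fo Fm \<longleftrightarrow> is_functor C D Fo Fm \<and>
     (\<exists>Go Gm \<eta> \<epsilon>. is_functor D C Go Gm \<and>
        is_nat_trans C C (\<lambda>X. X) (\<lambda>X Y f. f) (\<lambda>X. Go (Fo X))
           (\<lambda>X Y f. Gm (Fo X) (Fo Y) (Fm X Y f)) \<eta> \<and>
        (\<forall>X\<in>Ob C. is_iso C X (Go (Fo X)) (\<eta> X)) \<and>
        is_nat_trans D D (\<lambda>Y. Fo (Go Y)) (\<lambda>Y Y' g. Fm (Go Y) (Go Y') (Gm Y Y' g))
           (\<lambda>Y. Y) (\<lambda>Y Y' g. g) \<epsilon> \<and>
        (\<forall>Y\<in>Ob D. is_iso D (Fo (Go Y)) Y (\<epsilon> Y)))"

text \<open>Being flat,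
  squares are given by a predicate on boundaries: sq top left right bottom.
  Composition is written in applicative order: hcomp g f = g after f.\<close>
record ('o, 'h, 'v) dbl =
  obj   :: "'o set"
  hor   :: "'h set"
  hdom  :: "'h \<Rightarrow> 'o"
  hcod  :: "'h \<Rightarrow> 'o"
  hid   :: "'o \<Rightarrow> 'h"
  hcomp :: "'h \<Rightarrow> 'h \<Rightarrow> 'h"
  ver   :: "'v set"
  vdom  :: "'v \<Rightarrow> 'o"
  vcod  :: "'v \<Rightarrow> 'o"
  vid   :: "'o \<Rightarrow> 'v"
  vcomp :: "'v \<Rightarrow> 'v \<Rightarrow> 'v"
  sq    :: "'h \<Rightarrow> 'v \<Rightarrow> 'v \<Rightarrow> 'h \<Rightarrow> bool"

definition flat_double_cat :: "('o, 'h, 'v) dbl \<Rightarrow> bool" where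
  "flat_double_cat C \<longleftrightarrow>
   \<comment> \<open>horizontal category\<close>
   (\<forall>f\<in>hor C. hdom C f \<in> obj C \<and> hcod C f \<in> obj C) \<and>
   (\<forall>A\<in>obj C. hid C A \<in> hor C \<and> hdom C (hid C A) = A \<and> hcod C (hid C A) = A) \<and>
   (\<forall>f\<in>hor C. \<forall>g\<in>hor C. hcod C f = hdom C g \<longrightarrow>
      hcomp C g f \<in> hor C \<and> hdom C (hcomp C g f) = hdom C f \<and> hcod C (hcomp C g f) = hcod C g) \<and>
   (\<forall>f\<in>hor C. hcomp C f (hid C (hdom C f)) = f \<and> hcomp C (hid C (hcod C f)) f = f) \<and>
   (\<forall>f\<in>hor C. \<forall>g\<in>hor C. \<forall>k\<in>hor C. hcod C f = hdom C g \<longrightarrow> hcod C g = hdom C k \<longrightarrow>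
      hcomp C k (hcomp C g f) = hcomp C (hcomp C k g) f) \<and>
   \<comment> \<open>vertical category\<close>
   (\<forall>f\<in>ver C. vdom C f \<in> obj C \<and> vcod C f \<in> obj C) \<and>
   (\<forall>A\<in>obj C. vid C A \<in> ver C \<and> vdom C (vid C A) = A \<and> vcod C (vid C A) = A) \<and>
   (\<forall>f\<in>ver C. \<forall>g\<in>ver C. vcod C f = vdom C g \<longrightarrow>
      vcomp C g f \<in> ver C \<and> vdom C (vcomp C g f) = vdom C f \<and> vcod C (vcomp C g f) = vcod C g) \<and>
   (\<forall>f\<in>ver C. vcomp C f (vid C (vdom C f)) = f \<and> vcomp C (vid C (vcod C f)) f = f) \<and>
   (\<forall>f\<in>ver C. \<forall>g\<in>ver C. \<forall>k\<in>ver C. vcod C f = vdom C g \<longrightarrow> vcod C g = vdom C k \<longrightarrow>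
      vcomp C k (vcomp C g f) = vcomp C (vcomp C k g) f) \<and>
   \<comment> \<open>squares have well-formed boundaries\<close>
   (\<forall>t l r b. sq C t l r b \<longrightarrow>
      t \<in> hor C \<and> b \<in> hor C \<and> l \<in> ver C \<and> r \<in> ver C \<and>
      vdom C l = hdom C t \<and> vdom C r = hcod C t \<and>
      vcod C l = hdom C b \<and> vcod C r = hcod C b) \<and>
   \<comment> \<open>identity squares\<close>
   (\<forall>v\<in>ver C. sq C (hid C (vdom C v)) v v (hid C (vcod C v))) \<and>
   (\<forall>h\<in>hor C. sq C h (vid C (hdom C h)) (vid C (hcod C h)) h) \<and>
   \<comment> \<open>horizontal and vertical composition of squares\<close>
   (\<forall>t l m b t' r b'. sq C t l m b \<longrightarrow> sq C t' m r b' \<longrightarrow>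
      sq C (hcomp C t' t) l r (hcomp C b' b)) \<and>
   (\<forall>t l r m l' r' b. sq C t l r m \<longrightarrow> sq C m l' r' b \<longrightarrow>
      sq C t (vcomp C l' l) (vcomp C r' r) b)"

definition squares_cat :: "('o, 'h, 'v) dbl \<Rightarrow> 'o \<Rightarrow> bool" where
  "squares_cat C Z \<longleftrightarrow> flat_double_cat C \<and> Z \<in> obj C \<and>
     (\<forall>A\<in>obj C. \<exists>!h. h \<in> hor C \<and> hdom C h = Z \<and> hcod C h = A) \<and>
     (\<forall>A\<in>obj C. \<exists>!v. v \<in> ver C \<and> vdom C v = A \<and> vcod C v = Z)"

definition hinit :: "('o, 'h, 'v) dbl \<Rightarrow> 'o \<Rightarrow> 'o \<Rightarrow> 'h" where
  "hinit C Z A = (THE h. h \<in> hor C \<and> hdom C h = Z \<and> hcod C h = A)"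

definition vterm :: "('o, 'h, 'v) dbl \<Rightarrow> 'o \<Rightarrow> 'o \<Rightarrow> 'v" where
  "vterm C Z A = (THE v. v \<in> ver C \<and> vdom C v = A \<and> vcod C v = Z)"

definition vweq :: "('o, 'h, 'v) dbl \<Rightarrow> 'o \<Rightarrow> 'v \<Rightarrow> bool" where
  "vweq C Z f \<longleftrightarrow> f \<in> ver C \<and>
     sq C (hinit C Z (vdom C f)) (vid C Z) f (hinit C Z (vcod C f))"

definition hweq :: "('o, 'h, 'v) dbl \<Rightarrow> 'o \<Rightarrow> 'h \<Rightarrow> bool" where
  "hweq C Z g \<longleftrightarrow> g \<in> hor C \<and>
     sq C g (vterm C Z (hdom C g)) (vterm C Z (hcod C g)) (hid C Z)"

definition v_inverse :: "('o, 'h, 'v) dbl \<Rightarrow> 'v \<Rightarrow> 'v \<Rightarrow> bool" where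
  "v_inverse C f g \<longleftrightarrow> f \<in> ver C \<and> g \<in> ver C \<and>
     vdom C g = vcod C f \<and> vcod C g = vdom C f \<and>
     vcomp C g f = vid C (vdom C f) \<and> vcomp C f g = vid C (vcod C f)"

definition h_inverse :: "('o, 'h, 'v) dbl \<Rightarrow> 'h \<Rightarrow> 'h \<Rightarrow> bool" where
  "h_inverse C f g \<longleftrightarrow> f \<in> hor C \<and> g \<in> hor C \<and>
     hdom C g = hcod C f \<and> hcod C g = hdom C f \<and>
     hcomp C g f = hid C (hdom C f) \<and> hcomp C f g = hid C (hcod C f)"

section \<open>The vertical functor categories Fun^v(span,C), Fun^v(boxdot,C), Fun^v(cospan,C)\<close>

text \<open>A double functor span -> C is a pair (h, v) with h : a >-> b, v : a ->> c.
  A vertical transformation is (tau_a, tau_b, tau_c).\<close>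
definition span_cat :: "('o, 'h, 'v) dbl \<Rightarrow> ('h \<times> 'v, 'v \<times> 'v \<times> 'v) cat" where
  "span_cat C = \<lparr> Ob = {(h, v). h \<in> hor C \<and> v \<in> ver C \<and> hdom C h = vdom C v},
     Hom = (\<lambda>(h, v) (h', v'). {(ta, tb, tc).
        ta \<in> ver C \<and> tb \<in> ver C \<and> tc \<in> ver C \<and>
        vdom C ta = hdom C h \<and> vcod C ta = hdom C h' \<and>
        vdom C tb = hcod C h \<and> vcod C tb = hcod C h' \<and>
        vdom C tc = vcod C v \<and> vcod C tc = vcod C v' \<and>
        sq C h ta tb h' \<and> vcomp C v' ta = vcomp C tc v}),
     Cmp = (\<lambda>(a, b, c) (a', b', c'). (vcomp C a a', vcomp C b b', vcomp C c c')),
     Id = (\<lambda>(h, v). (vid C (hdom C h), vid C (hcod C h), vid C (vcod C v))) \<rparr>"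

text \<open>A double functor boxdot -> C is a square (t, l, r, b) of C
  (t : a >-> b, l : a ->> c, r : b ->> d, bottom b : c >-> d).
  A vertical transformation is (tau_a, tau_b, tau_c, tau_d).\<close>
definition square_cat :: "('o, 'h, 'v) dbl \<Rightarrow> ('h \<times> 'v \<times> 'v \<times> 'h, 'v \<times> 'v \<times> 'v \<times> 'v) cat" where
  "square_cat C = \<lparr> Ob = {(t, l, r, b). sq C t l r b},
     Hom = (\<lambda>(t, l, r, b) (t', l', r', b'). {(ta, tb, tc, td).
        ta \<in> ver C \<and> tb \<in> ver C \<and> tc \<in> ver C \<and> td \<in> ver C \<and>
        vdom C ta = hdom C t \<and> vcod C ta = hdom C t' \<and>
        vdom C tb = hcod C t \<and> vcod C tb = hcod C t' \<and>
        vdom C tc = hdom C b \<and> vcod C tc = hdom C b' \<and>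
        vdom C td = hcod C b \<and> vcod C td = hcod C b' \<and>
        sq C t ta tb t' \<and> sq C b tc td b' \<and>
        vcomp C l' ta = vcomp C tc l \<and> vcomp C r' tb = vcomp C td r}),
     Cmp = (\<lambda>(a, b, c, d) (a', b', c', d').
        (vcomp C a a', vcomp C b b', vcomp C c c', vcomp C d d')),
     Id = (\<lambda>(t, l, r, b). (vid C (hdom C t), vid C (hcod C t), vid C (hdom C b), vid C (hcod C b))) \<rparr>"

text \<open>A double functor cospan -> C is a pair (v, h) with v : b ->> d, h : c >-> d.
  A vertical transformation is (tau_b, tau_c, tau_d).\<close>
definition cospan_cat :: "('o, 'h, 'v) dbl \<Rightarrow> ('v \<times> 'h, 'v \<times> 'v \<times> 'v) cat" where
  "cospan_cat C = \<lparr> Ob = {(v, h). v \<in> ver C \<and> h \<in> hor C \<and> vcod C v = hcod C h},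
     Hom = (\<lambda>(v, h) (v', h'). {(tb, tc, td).
        tb \<in> ver C \<and> tc \<in> ver C \<and> td \<in> ver C \<and>
        vdom C tb = vdom C v \<and> vcod C tb = vdom C v' \<and>
        vdom C tc = hdom C h \<and> vcod C tc = hdom C h' \<and>
        vdom C td = vcod C v \<and> vcod C td = vcod C v' \<and>
        sq C h tc td h' \<and> vcomp C v' tb = vcomp C td v}),
     Cmp = (\<lambda>(b, c, d) (b', c', d'). (vcomp C b b', vcomp C c c', vcomp C d d')),
     Id = (\<lambda>(v, h). (vid C (vdom C v), vid C (hdom C h), vid C (vcod C v))) \<rparr>"

definition i_o :: "'h \<times> 'v \<times> 'v \<times> 'h \<Rightarrow> 'h \<times> 'v" where
  "i_o X = (case X of (t, l, r, b) \<Rightarrow> (t, l))"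
definition i_m :: "'x \<Rightarrow> 'x \<Rightarrow> 'v \<times> 'v \<times> 'v \<times> 'v \<Rightarrow> 'v \<times> 'v \<times> 'v" where
  "i_m X Y f = (case f of (a, b, c, d) \<Rightarrow> (a, b, c))"
definition j_o :: "'h \<times> 'v \<times> 'v \<times> 'h \<Rightarrow> 'v \<times> 'h" where
  "j_o X = (case X of (t, l, r, b) \<Rightarrow> (r, b))"
definition j_m :: "'x \<Rightarrow> 'x \<Rightarrow> 'v \<times> 'v \<times> 'v \<times> 'v \<Rightarrow> 'v \<times> 'v \<times> 'v" where
  "j_m X Y f = (case f of (a, b, c, d) \<Rightarrow> (b, c, d))"

definition stable :: "('o, 'h, 'v) dbl \<Rightarrow> 'o \<Rightarrow> bool" where
  "stable C Z \<longleftrightarrow> squares_cat C Z \<and>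
   \<comment> \<open>(i), (ii)\<close>
   (\<exists>so sm. is_functor (span_cat C) (square_cat C) so sm \<and>
      (\<forall>x\<in>Ob (span_cat C). i_o (so x) = x) \<and>
      (\<forall>x\<in>Ob (span_cat C). \<forall>y\<in>Ob (span_cat C). \<forall>f\<in>Hom (span_cat C) x y.
          i_m (so x) (so y) (sm x y f) = f) \<and>
      (\<exists>w. is_nat_trans (square_cat C) (square_cat C)
              (\<lambda>X. so (i_o X)) (\<lambda>X Y f. sm (i_o X) (i_o Y) (i_m X Y f))
              (\<lambda>X. X) (\<lambda>X Y f. f) w \<and>
           (\<forall>t l r b. sq C t l r b \<longrightarrow>
              (\<exists>d. w (t, l, r, b) = (vid C (hdom C t), vid C (hcod C t), vid C (hdom C b), d))))) \<and>
   \<comment> \<open>(iii), (iv)\<close>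
   (\<exists>to tm. is_functor (cospan_cat C) (square_cat C) to tm \<and>
      (\<forall>x\<in>Ob (cospan_cat C). j_o (to x) = x) \<and>
      (\<forall>x\<in>Ob (cospan_cat C). \<forall>y\<in>Ob (cospan_cat C). \<forall>f\<in>Hom (cospan_cat C) x y.
          j_m (to x) (to y) (tm x y f) = f) \<and>
      (\<exists>u. is_nat_trans (square_cat C) (square_cat C)
              (\<lambda>X. to (j_o X)) (\<lambda>X Y f. tm (j_o X) (j_o Y) (j_m X Y f))
              (\<lambda>X. X) (\<lambda>X Y f. f) u \<and>
           (\<forall>t l r b. sq C t l r b \<longrightarrow>
              (\<exists>a. vweq C Z a \<and>
                   u (t, l, r, b) = (a, vid C (hcod C t), vid C (hdom C b), vid C (hcod C b))))))"

definition isostable :: "('o, 'h, 'v) dbl \<Rightarrow> 'o \<Rightarrow> bool" where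
  "isostable C Z \<longleftrightarrow> stable C Z \<and>
     (\<forall>f. vweq C Z f \<longrightarrow> (\<exists>g. v_inverse C f g)) \<and>
     (\<forall>f. hweq C Z f \<longrightarrow> (\<exists>g. h_inverse C f g)) \<and>
     (\<forall>f k g g' h h'. f \<in> hor C \<longrightarrow> k \<in> hor C \<longrightarrow> v_inverse C g g' \<longrightarrow> v_inverse C h h' \<longrightarrow>
        vdom C g = hdom C f \<longrightarrow> vcod C g = hdom C k \<longrightarrow>
        vdom C h = hcod C f \<longrightarrow> vcod C h = hcod C k \<longrightarrow>
        (sq C f g h k \<longleftrightarrow> sq C k g' h' f))"

section \<open>The categories S^square_n C and V_n C, and the forgetful functor U_n\<close>

text \<open>All families are extensional (undefined outside the index range) so that
  objects/morphisms are uniquely represented.\<close>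
definition Sn_obj :: "('o, 'h, 'v) dbl \<Rightarrow> 'o \<Rightarrow> nat \<Rightarrow>
     ((nat \<Rightarrow> nat \<Rightarrow> 'o) \<times> (nat \<Rightarrow> nat \<Rightarrow> 'h) \<times> (nat \<Rightarrow> nat \<Rightarrow> 'v)) set" where
  "Sn_obj C Z n = {(A, hA, vA).
     (\<forall>j k. \<not> (j \<le> k \<and> k \<le> n) \<longrightarrow> A j k = undefined) \<and>
     (\<forall>j k. \<not> (j \<le> k \<and> k < n) \<longrightarrow> hA j k = undefined) \<and>
     (\<forall>j k. \<not> (j < k \<and> k \<le> n) \<longrightarrow> vA j k = undefined) \<and>
     (\<forall>j\<le>n. A j j = Z) \<and>
     (\<forall>j k. j \<le> k \<and> k \<le> n \<longrightarrow> A j k \<in> obj C) \<and>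
     (\<forall>j k. j \<le> k \<and> k < n \<longrightarrow>
        hA j k \<in> hor C \<and> hdom C (hA j k) = A j k \<and> hcod C (hA j k) = A j (k + 1)) \<and>
     (\<forall>j k. j < k \<and> k \<le> n \<longrightarrow>
        vA j k \<in> ver C \<and> vdom C (vA j k) = A j k \<and> vcod C (vA j k) = A (j + 1) k) \<and>
     (\<forall>j k. j < k \<and> k < n \<longrightarrow> sq C (hA j k) (vA j k) (vA j (k + 1)) (hA (j + 1) k))}"

definition Sn_hom :: "('o, 'h, 'v) dbl \<Rightarrow> 'o \<Rightarrow> nat \<Rightarrow>
     ((nat \<Rightarrow> nat \<Rightarrow> 'o) \<times> (nat \<Rightarrow> nat \<Rightarrow> 'h) \<times> (nat \<Rightarrow> nat \<Rightarrow> 'v)) \<Rightarrow>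
     ((nat \<Rightarrow> nat \<Rightarrow> 'o) \<times> (nat \<Rightarrow> nat \<Rightarrow> 'h) \<times> (nat \<Rightarrow> nat \<Rightarrow> 'v)) \<Rightarrow>
     (nat \<Rightarrow> nat \<Rightarrow> 'v) set" where
  "Sn_hom C Z n X Y = (case X of (A, hA, vA) \<Rightarrow> case Y of (A', hA', vA') \<Rightarrow> {f.
     (\<forall>j k. \<not> (j \<le> k \<and> k \<le> n) \<longrightarrow> f j k = undefined) \<and>
     (\<forall>j k. j \<le> k \<and> k \<le> n \<longrightarrow>
        f j k \<in> ver C \<and> vdom C (f j k) = A j k \<and> vcod C (f j k) = A' j k \<and> vweq C Z (f j k)) \<and>
     (\<forall>j k. j \<le> k \<and> k < n \<longrightarrow> sq C (hA j k) (f j k) (f j (k + 1)) (hA' j k)) \<and>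
     (\<forall>j k. j < k \<and> k \<le> n \<longrightarrow> vcomp C (vA' j k) (f j k) = vcomp C (f (j + 1) k) (vA j k))})"

definition Sn_cat :: "('o, 'h, 'v) dbl \<Rightarrow> 'o \<Rightarrow> nat \<Rightarrow>
     ((nat \<Rightarrow> nat \<Rightarrow> 'o) \<times> (nat \<Rightarrow> nat \<Rightarrow> 'h) \<times> (nat \<Rightarrow> nat \<Rightarrow> 'v), nat \<Rightarrow> nat \<Rightarrow> 'v) cat" where
  "Sn_cat C Z n = \<lparr> Ob = Sn_obj C Z n, Hom = Sn_hom C Z n,
     Cmp = (\<lambda>g f j k. if j \<le> k \<and> k \<le> n then vcomp C (g j k) (f j k) else undefined),
     Id = (\<lambda>(A, hA, vA) j k. if j \<le> k \<and> k \<le> n then vid C (A j k) else undefined) \<rparr>"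

definition Vn_obj :: "('o, 'h, 'v) dbl \<Rightarrow> 'o \<Rightarrow> nat \<Rightarrow> ((nat \<Rightarrow> 'o) \<times> (nat \<Rightarrow> 'v)) set" where
  "Vn_obj C Z n = {(a, p).
     (\<forall>i. \<not> (1 \<le> i \<and> i \<le> n) \<longrightarrow> a i = undefined \<and> p i = undefined) \<and>
     (\<forall>i. 1 \<le> i \<and> i \<le> n \<longrightarrow> a i \<in> obj C \<and> p i \<in> ver C \<and> vdom C (p i) = a i) \<and>
     (\<forall>i. 1 \<le> i \<and> i < n \<longrightarrow> vcod C (p i) = a (i + 1)) \<and>
     (1 \<le> n \<longrightarrow> vcod C (p n) = Z)}"

definition Vn_hom :: "('o, 'h, 'v) dbl \<Rightarrow> 'o \<Rightarrow> nat \<Rightarrow>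
     ((nat \<Rightarrow> 'o) \<times> (nat \<Rightarrow> 'v)) \<Rightarrow> ((nat \<Rightarrow> 'o) \<times> (nat \<Rightarrow> 'v)) \<Rightarrow> (nat \<Rightarrow> 'v) set" where
  "Vn_hom C Z n X Y = (case X of (a, p) \<Rightarrow> case Y of (a', p') \<Rightarrow> {g.
     (\<forall>i. \<not> (1 \<le> i \<and> i \<le> n) \<longrightarrow> g i = undefined) \<and>
     (\<forall>i. 1 \<le> i \<and> i \<le> n \<longrightarrow>
        g i \<in> ver C \<and> vdom C (g i) = a i \<and> vcod C (g i) = a' i \<and> vweq C Z (g i)) \<and>
     (\<forall>i. 1 \<le> i \<and> i < n \<longrightarrow> vcomp C (p' i) (g i) = vcomp C (g (i + 1)) (p i)) \<and>
     (1 \<le> n \<longrightarrow> vcomp C (p' n) (g n) = vcomp C (vid C Z) (p n))})"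

definition Vn_cat :: "('o, 'h, 'v) dbl \<Rightarrow> 'o \<Rightarrow> nat \<Rightarrow> ((nat \<Rightarrow> 'o) \<times> (nat \<Rightarrow> 'v), nat \<Rightarrow> 'v) cat" where
  "Vn_cat C Z n = \<lparr> Ob = Vn_obj C Z n, Hom = Vn_hom C Z n,
     Cmp = (\<lambda>g f i. if 1 \<le> i \<and> i \<le> n then vcomp C (g i) (f i) else undefined),
     Id = (\<lambda>(a, p) i. if 1 \<le> i \<and> i \<le> n then vid C (a i) else undefined) \<rparr>"

definition Un_o :: "nat \<Rightarrow> (nat \<Rightarrow> nat \<Rightarrow> 'o) \<times> (nat \<Rightarrow> nat \<Rightarrow> 'h) \<times> (nat \<Rightarrow> nat \<Rightarrow> 'v)
     \<Rightarrow> (nat \<Rightarrow> 'o) \<times> (nat \<Rightarrow> 'v)" where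
  "Un_o n X = (case X of (A, hA, vA) \<Rightarrow>
     (\<lambda>i. if 1 \<le> i \<and> i \<le> n then A (i - 1) n else undefined,
      \<lambda>i. if 1 \<le> i \<and> i \<le> n then vA (i - 1) n else undefined))"

definition Un_m :: "nat \<Rightarrow> 'x \<Rightarrow> 'x \<Rightarrow> (nat \<Rightarrow> nat \<Rightarrow> 'v) \<Rightarrow> nat \<Rightarrow> 'v" where
  "Un_m n X Y f = (\<lambda>i. if 1 \<le> i \<and> i \<le> n then f (i - 1) n else undefined)"

end

theory Submission
  imports Defs
begin

text \<open>\<open>U\<^sub>n\<close> is surjective on objects, full and faithful, hence an equivalence. All three
  properties are proved by filling the staircase \<open>(A\<^sub>j\<^sub>k)\<close> cell by cell, starting from
  the right column recorded by \<open>U\<^sub>n\<close> and moving towards the diagonal. Stability (iii)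
  completes every cospan to a square, which builds objects. The counit \<open>u\<close> of (iv) has
  invertible components, so that a morphism between two squares is determined by, and
  exists for, any morphism between their right-bottom cospans; hence a morphism of columns
  extends uniquely to the whole staircase. The extended components are again weak
  equivalences because the left edge of a square is a weak equivalence as soon as its right
  edge is one, which is proved by comparing counits as well.\<close>

section \<open>Fully faithful functors that are surjective on objects\<close>

locale fully_faithful_surjective =
  fixes C :: "('x, 'm) cat" and D :: "('y, 'n) cat"
    and Fo :: "'x \<Rightarrow> 'y" and Fm :: "'x \<Rightarrow> 'x \<Rightarrow> 'm \<Rightarrow> 'n"
  assumes F_functor: "is_functor C D Fo Fm"
    and C_Id: "\<And>X. X \<in> Ob C \<Longrightarrow> Id C X \<in> Hom C X X"
    and C_Cmp: "\<And>X Y W f g. \<lbrakk>X \<in> Ob C; Y \<in> Ob C; W \<in> Ob C; f \<in> Hom C X Y; g \<in> Hom C Y W\<rbrakk>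
                  \<Longrightarrow> Cmp C g f \<in> Hom C X W"
    and D_Id: "\<And>Y. Y \<in> Ob D \<Longrightarrow> Id D Y \<in> Hom D Y Y"
    and D_Id_left: "\<And>X Y g. \<lbrakk>X \<in> Ob D; Y \<in> Ob D; g \<in> Hom D X Y\<rbrakk> \<Longrightarrow> Cmp D (Id D Y) g = g"
    and D_Id_right: "\<And>X Y g. \<lbrakk>X \<in> Ob D; Y \<in> Ob D; g \<in> Hom D X Y\<rbrakk> \<Longrightarrow> Cmp D g (Id D X) = g"
    and surjective: "\<And>Y. Y \<in> Ob D \<Longrightarrow> \<exists>X\<in>Ob C. Fo X = Y"
    and full: "\<And>X X' g. \<lbrakk>X \<in> Ob C; X' \<in> Ob C; g \<in> Hom D (Fo X) (Fo X')\<rbrakk>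
                 \<Longrightarrow> \<exists>f\<in>Hom C X X'. Fm X X' f = g"
    and faithful: "\<And>X X' f f'. \<lbrakk>X \<in> Ob C; X' \<in> Ob C; f \<in> Hom C X X'; f' \<in> Hom C X X';
                     Fm X X' f = Fm X X' f'\<rbrakk> \<Longrightarrow> f = f'"
begin

lemma F_Ob: "X \<in> Ob C \<Longrightarrow> Fo X \<in> Ob D"
  and F_Hom: "\<lbrakk>X \<in> Ob C; Y \<in> Ob C; f \<in> Hom C X Y\<rbrakk> \<Longrightarrow> Fm X Y f \<in> Hom D (Fo X) (Fo Y)"
  and F_Id: "X \<in> Ob C \<Longrightarrow> Fm X X (Id C X) = Id D (Fo X)"
  and F_Cmp: "\<lbrakk>X \<in> Ob C; Y \<in> Ob C; W \<in> Ob C; f \<in> Hom C X Y; g \<in> Hom C Y W\<rbrakk>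
                \<Longrightarrow> Fm X W (Cmp C g f) = Cmp D (Fm Y W g) (Fm X Y f)"
  using F_functor unfolding is_functor_def by blast+

definition Go :: "'y \<Rightarrow> 'x" where
  "Go Y = (SOME X. X \<in> Ob C \<and> Fo X = Y)"

definition Gm :: "'y \<Rightarrow> 'y \<Rightarrow> 'n \<Rightarrow> 'm" where
  "Gm Y Y' g = (SOME f. f \<in> Hom C (Go Y) (Go Y') \<and> Fm (Go Y) (Go Y') f = g)"

definition \<eta> :: "'x \<Rightarrow> 'm" where
  "\<eta> X = (SOME f. f \<in> Hom C X (Go (Fo X)) \<and> Fm X (Go (Fo X)) f = Id D (Fo X))"

lemma Go_spec: "Y \<in> Ob D \<Longrightarrow> Go Y \<in> Ob C" "Y \<in> Ob D \<Longrightarrow> Fo (Go Y) = Y"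
  unfolding Go_def using someI_ex[OF surjective[unfolded Bex_def]] by blast+

lemma Gm_spec:
  assumes "Y \<in> Ob D" "Y' \<in> Ob D" "g \<in> Hom D Y Y'"
  shows "Gm Y Y' g \<in> Hom C (Go Y) (Go Y')" "Fm (Go Y) (Go Y') (Gm Y Y' g) = g"
proof -
  have "\<exists>f. f \<in> Hom C (Go Y) (Go Y') \<and> Fm (Go Y) (Go Y') f = g"
    using full[of "Go Y" "Go Y'" g] Go_spec assms by auto
  then have "Gm Y Y' g \<in> Hom C (Go Y) (Go Y') \<and> Fm (Go Y) (Go Y') (Gm Y Y' g) = g"
    unfolding Gm_def by (rule someI_ex)
  then show "Gm Y Y' g \<in> Hom C (Go Y) (Go Y')" "Fm (Go Y) (Go Y') (Gm Y Y' g) = g"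
    by blast+
qed

lemma \<eta>_spec:
  assumes "X \<in> Ob C"
  shows "\<eta> X \<in> Hom C X (Go (Fo X))" "Fm X (Go (Fo X)) (\<eta> X) = Id D (Fo X)"
proof -
  have "\<exists>f. f \<in> Hom C X (Go (Fo X)) \<and> Fm X (Go (Fo X)) f = Id D (Fo X)"
    using full[of X "Go (Fo X)" "Id D (Fo X)"] Go_spec[OF F_Ob] D_Id[OF F_Ob] assms by auto
  then have "\<eta> X \<in> Hom C X (Go (Fo X)) \<and> Fm X (Go (Fo X)) (\<eta> X) = Id D (Fo X)"
    unfolding \<eta>_def by (rule someI_ex)
  then show "\<eta> X \<in> Hom C X (Go (Fo X))" "Fm X (Go (Fo X)) (\<eta> X) = Id D (Fo X)"
    by blast+
qed

lemma G_functor: "is_functor D C Go Gm"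
  unfolding is_functor_def
proof (intro conjI ballI)
  show "Go X \<in> Ob C" if "X \<in> Ob D" for X
    using Go_spec that by blast
  show "Gm X Y f \<in> Hom C (Go X) (Go Y)" if "X \<in> Ob D" "Y \<in> Ob D" "f \<in> Hom D X Y" for X Y f
    using Gm_spec that by blast
next
  fix X assume X: "X \<in> Ob D"
  show "Gm X X (Id D X) = Id C (Go X)"
    using Gm_spec[OF X X D_Id[OF X]] Go_spec[OF X] C_Id F_Id by (intro faithful) auto
next
  fix X Y W f g
  assume X: "X \<in> Ob D" and Y: "Y \<in> Ob D" and W: "W \<in> Ob D"
    and f: "f \<in> Hom D X Y" and g: "g \<in> Hom D Y W"
  have gf: "Cmp C (Gm Y W g) (Gm X Y f) \<in> Hom C (Go X) (Go W)"
    using C_Cmp Go_spec X Y W Gm_spec[OF X Y f] Gm_spec[OF Y W g] by blast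
  have F_gf: "Fm (Go X) (Go W) (Cmp C (Gm Y W g) (Gm X Y f)) = Cmp D g f"
    using F_Cmp[OF Go_spec(1)[OF X] Go_spec(1)[OF Y] Go_spec(1)[OF W] Gm_spec(1)[OF X Y f] Gm_spec(1)[OF Y W g]]
      Gm_spec(2)[OF X Y f] Gm_spec(2)[OF Y W g] by simp
  then have "Cmp D g f \<in> Hom D X W"
    using F_Hom[OF _ _ gf] Go_spec X W by force
  with gf F_gf show "Gm X W (Cmp D g f) = Cmp C (Gm Y W g) (Gm X Y f)"
    using Gm_spec[OF X W] Go_spec X W by (intro faithful) auto
qed

lemma \<eta>_natural:
  "is_nat_trans C C (\<lambda>X. X) (\<lambda>X Y f. f) (\<lambda>X. Go (Fo X)) (\<lambda>X Y f. Gm (Fo X) (Fo Y) (Fm X Y f)) \<eta>"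
  unfolding is_nat_trans_def
proof (intro conjI ballI)
  show "\<eta> X \<in> Hom C X (Go (Fo X))" if "X \<in> Ob C" for X
    using \<eta>_spec that by blast
next
  fix X Y f assume X: "X \<in> Ob C" and Y: "Y \<in> Ob C" and f: "f \<in> Hom C X Y"
  note GFX = Go_spec[OF F_Ob[OF X]] and GFY = Go_spec[OF F_Ob[OF Y]] and Ff = F_Hom[OF X Y f]
  note GFf = Gm_spec[OF F_Ob[OF X] F_Ob[OF Y] Ff]
  have "Fm X (Go (Fo Y)) (Cmp C (\<eta> Y) f) = Fm X Y f"
    using F_Cmp[OF X Y _ f \<eta>_spec(1)[OF Y]] \<eta>_spec(2)[OF Y] D_Id_left[OF F_Ob[OF X] F_Ob[OF Y] Ff] GFY Y
    by simp
  moreover have "Fm X (Go (Fo Y)) (Cmp C (Gm (Fo X) (Fo Y) (Fm X Y f)) (\<eta> X)) = Fm X Y f"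
    using F_Cmp[OF X _ _ \<eta>_spec(1)[OF X] GFf(1)] \<eta>_spec(2)[OF X] GFX GFY GFf(2)
      D_Id_right[OF F_Ob[OF X] F_Ob[OF Y] Ff]
    by simp
  ultimately show "Cmp C (\<eta> Y) f = Cmp C (Gm (Fo X) (Fo Y) (Fm X Y f)) (\<eta> X)"
    using C_Cmp[OF X Y _ f \<eta>_spec(1)[OF Y]] C_Cmp[OF X _ _ \<eta>_spec(1)[OF X] GFf(1)] GFX GFY X
    by (intro faithful) auto
qed

lemma \<eta>_iso: "X \<in> Ob C \<Longrightarrow> is_iso C X (Go (Fo X)) (\<eta> X)"
proof -
  assume X: "X \<in> Ob C"
  note FX = F_Ob[OF X]
  note GFX = Go_spec[OF FX]
  obtain \<theta> where \<theta>: "\<theta> \<in> Hom C (Go (Fo X)) X" "Fm (Go (Fo X)) X \<theta> = Id D (Fo X)"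
    using full[of "Go (Fo X)" X "Id D (Fo X)"] GFX X D_Id[OF FX] by auto
  have Id_Id: "Cmp D (Id D (Fo X)) (Id D (Fo X)) = Id D (Fo X)"
    using D_Id_left[OF FX FX D_Id[OF FX]] .
  have "Cmp C \<theta> (\<eta> X) = Id C X"
    using C_Cmp[OF X _ X \<eta>_spec(1)[OF X] \<theta>(1)] F_Cmp[OF X _ X \<eta>_spec(1)[OF X] \<theta>(1)] C_Id F_Id
      \<eta>_spec(2)[OF X] \<theta>(2) Id_Id GFX X
    by (intro faithful) auto
  moreover have "Cmp C (\<eta> X) \<theta> = Id C (Go (Fo X))"
    using C_Cmp[OF _ X _ \<theta>(1) \<eta>_spec(1)[OF X]] F_Cmp[OF _ X _ \<theta>(1) \<eta>_spec(1)[OF X]] C_Id F_Id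
      \<eta>_spec(2)[OF X] \<theta>(2) Id_Id GFX X
    by (intro faithful) auto
  ultimately show ?thesis
    unfolding is_iso_def using \<eta>_spec(1)[OF X] \<theta>(1) by blast
qed

lemma equivalence: "is_equivalence C D Fo Fm"
proof -
  have "is_nat_trans D D (\<lambda>Y. Fo (Go Y)) (\<lambda>Y Y' g. Fm (Go Y) (Go Y') (Gm Y Y' g))
          (\<lambda>Y. Y) (\<lambda>Y Y' g. g) (Id D)"
    unfolding is_nat_trans_def using Go_spec Gm_spec D_Id D_Id_left D_Id_right by auto
  moreover have "\<forall>Y\<in>Ob D. is_iso D (Fo (Go Y)) Y (Id D Y)"
    unfolding is_iso_def using Go_spec D_Id D_Id_left by fastforce
  ultimately show ?thesis
    unfolding is_equivalence_def using F_functor G_functor \<eta>_natural \<eta>_iso by blast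
qed

end

section \<open>Flat double categories and squares categories\<close>

locale flat_double_category =
  fixes C :: "('o, 'h, 'v) dbl"
  assumes flat: "flat_double_cat C"
begin

lemma hdom_hcod: "f \<in> hor C \<Longrightarrow> hdom C f \<in> obj C \<and> hcod C f \<in> obj C"
  using flat by (simp add: flat_double_cat_def)

lemma hcomp: "\<lbrakk>f \<in> hor C; g \<in> hor C; hcod C f = hdom C g\<rbrakk>
      \<Longrightarrow> hcomp C g f \<in> hor C \<and> hdom C (hcomp C g f) = hdom C f \<and> hcod C (hcomp C g f) = hcod C g"
  using flat by (simp add: flat_double_cat_def)

lemma vdom_vcod: "f \<in> ver C \<Longrightarrow> vdom C f \<in> obj C \<and> vcod C f \<in> obj C"
  using flat by (simp add: flat_double_cat_def)

lemma vid: "A \<in> obj C \<Longrightarrow> vid C A \<in> ver C \<and> vdom C (vid C A) = A \<and> vcod C (vid C A) = A"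
  using flat by (simp add: flat_double_cat_def)

lemma vcomp: "\<lbrakk>f \<in> ver C; g \<in> ver C; vcod C f = vdom C g\<rbrakk>
      \<Longrightarrow> vcomp C g f \<in> ver C \<and> vdom C (vcomp C g f) = vdom C f \<and> vcod C (vcomp C g f) = vcod C g"
  using flat by (simp add: flat_double_cat_def)

lemma vcomp_vid_right: "f \<in> ver C \<Longrightarrow> vcomp C f (vid C (vdom C f)) = f"
  using flat by (simp add: flat_double_cat_def)

lemma vcomp_vid_left: "f \<in> ver C \<Longrightarrow> vcomp C (vid C (vcod C f)) f = f"
  using flat by (simp add: flat_double_cat_def)

lemma vcomp_assoc: "\<lbrakk>f \<in> ver C; g \<in> ver C; k \<in> ver C; vcod C f = vdom C g; vcod C g = vdom C k\<rbrakk>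
      \<Longrightarrow> vcomp C k (vcomp C g f) = vcomp C (vcomp C k g) f"
  using flat by (simp add: flat_double_cat_def)

lemma sq_boundary: "sq C t l r b \<Longrightarrow> t \<in> hor C \<and> b \<in> hor C \<and> l \<in> ver C \<and> r \<in> ver C \<and>
      vdom C l = hdom C t \<and> vdom C r = hcod C t \<and> vcod C l = hdom C b \<and> vcod C r = hcod C b"
  using flat by (simp add: flat_double_cat_def)

lemma sq_vid: "h \<in> hor C \<Longrightarrow> sq C h (vid C (hdom C h)) (vid C (hcod C h)) h"
  using flat by (simp add: flat_double_cat_def)

lemma sq_hcomp: "\<lbrakk>sq C t l m b; sq C t' m r b'\<rbrakk> \<Longrightarrow> sq C (hcomp C t' t) l r (hcomp C b' b)"
  using flat by (simp add: flat_double_cat_def)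

lemma sq_vcomp: "\<lbrakk>sq C t l r m; sq C m l' r' b\<rbrakk> \<Longrightarrow> sq C t (vcomp C l' l) (vcomp C r' r) b"
  using flat by (simp add: flat_double_cat_def)

lemma v_inverse_vid: "A \<in> obj C \<Longrightarrow> v_inverse C (vid C A) (vid C A)"
  unfolding v_inverse_def using vid[of A] vcomp_vid_left[of "vid C A"] by auto

lemma vcomp_paste:
  assumes "f \<in> ver C" "g \<in> ver C" "f' \<in> ver C" "g' \<in> ver C" "v \<in> ver C" "v' \<in> ver C" "v'' \<in> ver C"
    and "vcod C f = vdom C g" "vcod C f = vdom C v'" "vcod C g = vdom C v''" "vdom C f = vdom C v"
    and "vcod C v = vdom C f'" "vcod C f' = vdom C g'" "vcod C v' = vdom C g'"
    and "vcomp C v' f = vcomp C f' v" "vcomp C v'' g = vcomp C g' v'"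
  shows "vcomp C v'' (vcomp C g f) = vcomp C (vcomp C g' f') v"
proof -
  have "vcomp C v'' (vcomp C g f) = vcomp C (vcomp C g' v') f"
    using vcomp_assoc assms by metis
  also have "\<dots> = vcomp C g' (vcomp C f' v)"
    using vcomp_assoc assms by metis
  also have "\<dots> = vcomp C (vcomp C g' f') v"
    using vcomp_assoc assms by metis
  finally show ?thesis .
qed

end

locale squares_category =
  fixes C :: "('o, 'h, 'v) dbl" and Z :: 'o
  assumes squares: "squares_cat C Z"

sublocale squares_category \<subseteq> flat_double_category C
  using squares by unfold_locales (simp add: squares_cat_def)

context squares_category
begin

lemma O_obj: "Z \<in> obj C"
  using squares by (simp add: squares_cat_def)

lemma hinit: "A \<in> obj C \<Longrightarrow> hinit C Z A \<in> hor C \<and> hdom C (hinit C Z A) = Z \<and> hcod C (hinit C Z A) = A"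
  unfolding hinit_def using squares theI'[of "\<lambda>h. h \<in> hor C \<and> hdom C h = Z \<and> hcod C h = A"]
  by (simp add: squares_cat_def)

lemma hinit_unique: "\<lbrakk>h \<in> hor C; hdom C h = Z\<rbrakk> \<Longrightarrow> h = hinit C Z (hcod C h)"
  using squares hinit hdom_hcod unfolding squares_cat_def by metis

lemma ver_to_O_unique:
  "\<lbrakk>v \<in> ver C; v' \<in> ver C; vdom C v' = vdom C v; vcod C v = Z; vcod C v' = Z\<rbrakk> \<Longrightarrow> v' = v"
  using squares vdom_vcod unfolding squares_cat_def by metis

lemma vid_O_unique: "\<lbrakk>v \<in> ver C; vdom C v = Z; vcod C v = Z\<rbrakk> \<Longrightarrow> v = vid C Z"
  using ver_to_O_unique[of "vid C Z" v] vid[OF O_obj] by auto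

lemma vweq_vid: "A \<in> obj C \<Longrightarrow> vweq C Z (vid C A)"
  unfolding vweq_def using vid[of A] hinit[of A] sq_vid[of "hinit C Z A"] by auto

lemma vweq_vcomp:
  assumes f: "vweq C Z f" and g: "vweq C Z g" and fg: "vcod C f = vdom C g"
  shows "vweq C Z (vcomp C g f)"
proof -
  have "sq C (hinit C Z (vdom C f)) (vcomp C (vid C Z) (vid C Z)) (vcomp C g f) (hinit C Z (vcod C g))"
    using sq_vcomp f g fg unfolding vweq_def by metis
  moreover have "vcomp C (vid C Z) (vid C Z) = vid C Z"
    using vcomp_vid_left vid[OF O_obj] by metis
  ultimately show ?thesis
    using f g fg vcomp unfolding vweq_def by auto
qed

lemma vweq_right_of_sq:
  assumes s: "sq C t l r b" and b: "hdom C b = Z" and l: "vweq C Z l"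
  shows "vweq C Z r"
proof -
  have bd: "t \<in> hor C" "b \<in> hor C" "l \<in> ver C" "r \<in> ver C" "vdom C l = hdom C t"
    "vdom C r = hcod C t" "vcod C l = Z" "vcod C r = hcod C b"
    using sq_boundary[OF s] b by auto
  have "sq C (hinit C Z (vdom C l)) (vid C Z) l (hinit C Z Z)"
    using l bd unfolding vweq_def by simp
  from sq_hcomp[OF this s]
  have "sq C (hcomp C t (hinit C Z (vdom C l))) (vid C Z) r (hcomp C b (hinit C Z Z))" .
  moreover have "hcomp C t (hinit C Z (vdom C l)) = hinit C Z (vdom C r)"
    using hinit_unique hcomp[of "hinit C Z (vdom C l)" t] hinit[of "vdom C l"] vdom_vcod bd by metis
  moreover have "hcomp C b (hinit C Z Z) = hinit C Z (vcod C r)"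
    using hinit_unique hcomp[of "hinit C Z Z" b] hinit[OF O_obj] bd b by metis
  ultimately show ?thesis
    using bd unfolding vweq_def by simp
qed

end

section \<open>Consequences of isostability\<close>

lemma square_cat_Ob [simp]: "(t, l, r, b) \<in> Ob (square_cat C) \<longleftrightarrow> sq C t l r b"
  by (simp add: square_cat_def)

lemma square_cat_Hom [simp]:
  "(ta, tb, tc, td) \<in> Hom (square_cat C) (t, l, r, b) (t', l', r', b') \<longleftrightarrow>
     ta \<in> ver C \<and> tb \<in> ver C \<and> tc \<in> ver C \<and> td \<in> ver C \<and>
     vdom C ta = hdom C t \<and> vcod C ta = hdom C t' \<and>
     vdom C tb = hcod C t \<and> vcod C tb = hcod C t' \<and>
     vdom C tc = hdom C b \<and> vcod C tc = hdom C b' \<and>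
     vdom C td = hcod C b \<and> vcod C td = hcod C b' \<and>
     sq C t ta tb t' \<and> sq C b tc td b' \<and>
     vcomp C l' ta = vcomp C tc l \<and> vcomp C r' tb = vcomp C td r"
  by (simp add: square_cat_def)

lemma square_cat_Cmp [simp]:
  "Cmp (square_cat C) (a, b, c, d) (a', b', c', d') =
     (vcomp C a a', vcomp C b b', vcomp C c c', vcomp C d d')"
  by (simp add: square_cat_def)

lemma cospan_cat_Ob [simp]:
  "(v, h) \<in> Ob (cospan_cat C) \<longleftrightarrow> v \<in> ver C \<and> h \<in> hor C \<and> vcod C v = hcod C h"
  by (simp add: cospan_cat_def)

lemma cospan_cat_Hom [simp]:
  "(tb, tc, td) \<in> Hom (cospan_cat C) (v, h) (v', h') \<longleftrightarrow>
     tb \<in> ver C \<and> tc \<in> ver C \<and> td \<in> ver C \<and>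
     vdom C tb = vdom C v \<and> vcod C tb = vdom C v' \<and>
     vdom C tc = hdom C h \<and> vcod C tc = hdom C h' \<and>
     vdom C td = vcod C v \<and> vcod C td = vcod C v' \<and>
     sq C h tc td h' \<and> vcomp C v' tb = vcomp C td v"
  by (simp add: cospan_cat_def)

text \<open>The parameters \<open>to\<close>, \<open>tm\<close> and \<open>u\<close> are the section \<open>t\<close> of \<open>j\<^sup>*\<close> and the
  natural transformation \<open>u : t j\<^sup>* \<Rightarrow> id\<close> provided by stability conditions (iii) and (iv).\<close>
locale isostable_squares =
  fixes C :: "('o, 'h, 'v) dbl" and Z :: 'o
    and to :: "'v \<times> 'h \<Rightarrow> 'h \<times> 'v \<times> 'v \<times> 'h"
    and tm :: "'v \<times> 'h \<Rightarrow> 'v \<times> 'h \<Rightarrow> 'v \<times> 'v \<times> 'v \<Rightarrow> 'v \<times> 'v \<times> 'v \<times> 'v"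
    and u :: "'h \<times> 'v \<times> 'v \<times> 'h \<Rightarrow> 'v \<times> 'v \<times> 'v \<times> 'v"
  assumes isostable: "isostable C Z"
    and t_functor: "is_functor (cospan_cat C) (square_cat C) to tm"
    and to_section: "\<And>x. x \<in> Ob (cospan_cat C) \<Longrightarrow> j_o (to x) = x"
    and tm_section: "\<And>x y f. \<lbrakk>x \<in> Ob (cospan_cat C); y \<in> Ob (cospan_cat C);
                       f \<in> Hom (cospan_cat C) x y\<rbrakk> \<Longrightarrow> j_m (to x) (to y) (tm x y f) = f"
    and u_natural: "is_nat_trans (square_cat C) (square_cat C) (\<lambda>X. to (j_o X))
                      (\<lambda>X Y f. tm (j_o X) (j_o Y) (j_m X Y f)) (\<lambda>X. X) (\<lambda>X Y f. f) u"
    and u_components: "\<And>t l r b. sq C t l r b \<Longrightarrow> \<exists>a. vweq C Z a \<and>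
                         u (t, l, r, b) = (a, vid C (hcod C t), vid C (hdom C b), vid C (hcod C b))"

sublocale isostable_squares \<subseteq> squares_category C Z
  using isostable by unfold_locales (simp add: isostable_def stable_def)

lemma isostable_squares_exists:
  assumes "isostable C Z"
  obtains to tm u where "isostable_squares C Z to tm u"
proof -
  have "stable C Z"
    using assms unfolding isostable_def by blast
  then obtain to tm u where
    "is_functor (cospan_cat C) (square_cat C) to tm"
    "\<forall>x\<in>Ob (cospan_cat C). j_o (to x) = x"
    "\<forall>x\<in>Ob (cospan_cat C). \<forall>y\<in>Ob (cospan_cat C). \<forall>f\<in>Hom (cospan_cat C) x y.
       j_m (to x) (to y) (tm x y f) = f"
    "is_nat_trans (square_cat C) (square_cat C) (\<lambda>X. to (j_o X))
       (\<lambda>X Y f. tm (j_o X) (j_o Y) (j_m X Y f)) (\<lambda>X. X) (\<lambda>X Y f. f) u"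
    "\<forall>t l r b. sq C t l r b \<longrightarrow>
       (\<exists>a. vweq C Z a \<and> u (t, l, r, b) = (a, vid C (hcod C t), vid C (hdom C b), vid C (hcod C b)))"
    unfolding stable_def by blast
  then have "isostable_squares C Z to tm u"
    using assms by unfold_locales auto
  with that show thesis .
qed

context isostable_squares
begin

lemma sq_transpose:
  assumes s: "sq C f g h k" and g: "v_inverse C g g'" and h: "v_inverse C h h'"
  shows "sq C k g' h' f"
proof -
  have "\<forall>f k g g' h h'. f \<in> hor C \<longrightarrow> k \<in> hor C \<longrightarrow> v_inverse C g g' \<longrightarrow> v_inverse C h h' \<longrightarrow>
        vdom C g = hdom C f \<longrightarrow> vcod C g = hdom C k \<longrightarrow>
        vdom C h = hcod C f \<longrightarrow> vcod C h = hcod C k \<longrightarrow>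
        (sq C f g h k \<longleftrightarrow> sq C k g' h' f)"
    using isostable unfolding isostable_def by (elim conjE)
  then show ?thesis
    using s g h sq_boundary[OF s] by blast
qed

lemma vweq_inverse:
  assumes f: "vweq C Z f"
  obtains f' where "v_inverse C f f'" "vweq C Z f'"
proof -
  obtain f' where f': "v_inverse C f f'"
    using isostable f unfolding isostable_def by blast
  have "sq C (hinit C Z (vdom C f)) (vid C Z) f (hinit C Z (vcod C f))"
    using f unfolding vweq_def by blast
  from sq_transpose[OF this v_inverse_vid[OF O_obj] f']
  have "sq C (hinit C Z (vcod C f)) (vid C Z) f' (hinit C Z (vdom C f))" .
  with f' show thesis
    using that unfolding vweq_def v_inverse_def by auto
qed

lemma vcomp_cancel_inverse_right:
  assumes a: "v_inverse C a a'" and f: "f \<in> ver C" "vdom C f = vcod C a"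
    and f': "f' \<in> ver C" "vdom C f' = vcod C a" and eq: "vcomp C f a = vcomp C f' a"
  shows "f = f'"
proof -
  have a': "a \<in> ver C" "a' \<in> ver C" "vdom C a' = vcod C a" "vcod C a' = vdom C a"
    "vcomp C a a' = vid C (vcod C a)"
    using a unfolding v_inverse_def by auto
  have "f = vcomp C f (vcomp C a a')"
    using a' f vcomp_vid_right by metis
  also have "\<dots> = vcomp C (vcomp C f' a) a'"
    using vcomp_assoc[of a' a f] a' f eq by simp
  also have "\<dots> = vcomp C f' (vcomp C a a')"
    using vcomp_assoc[of a' a f'] a' f' by simp
  also have "\<dots> = f'"
    using a' f' vcomp_vid_right by metis
  finally show ?thesis .
qed

lemma vweq_cancel_right:
  assumes g: "g \<in> ver C" and f: "vweq C Z f" and fg: "vcod C f = vdom C g"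
    and gf: "vweq C Z (vcomp C g f)"
  shows "vweq C Z g"
proof -
  obtain f' where f': "v_inverse C f f'" "vweq C Z f'"
    using vweq_inverse[OF f] .
  have f'w: "f \<in> ver C" "f' \<in> ver C" "vdom C f' = vcod C f" "vcod C f' = vdom C f"
    "vcomp C f f' = vid C (vcod C f)"
    using f'(1) unfolding v_inverse_def by auto
  have "g = vcomp C g (vcomp C f f')"
    using f'w g fg vcomp_vid_right by metis
  also have "\<dots> = vcomp C (vcomp C g f) f'"
    using vcomp_assoc[of f' f g] f'w g fg by simp
  finally have "g = vcomp C (vcomp C g f) f'" .
  moreover have "vweq C Z (vcomp C (vcomp C g f) f')"
    using vweq_vcomp[OF f'(2) gf] vcomp[OF f'w(1) g fg] f'w by simp
  ultimately show ?thesis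
    by simp
qed

lemma cospan_completion:
  assumes "r \<in> ver C" "b \<in> hor C" "vcod C r = hcod C b"
  obtains t l where "to (r, b) = (t, l, r, b)" "sq C t l r b"
proof -
  have rb: "(r, b) \<in> Ob (cospan_cat C)"
    using assms by simp
  then have "to (r, b) \<in> Ob (square_cat C)"
    using t_functor unfolding is_functor_def by blast
  moreover have "j_o (to (r, b)) = (r, b)"
    using to_section[OF rb] .
  ultimately show thesis
    using that by (cases "to (r, b)") (auto simp: j_o_def)
qed

lemma counit_component:
  assumes s: "sq C t l r b" and rb: "to (r, b) = (t0, l0, r, b)"
  obtains a where "vweq C Z a"
    "u (t, l, r, b) = (a, vid C (hcod C t), vid C (hdom C b), vid C (hcod C b))"
    "vdom C a = hdom C t0" "vcod C a = hdom C t" "sq C t0 a (vid C (hcod C t)) t" "vcomp C l a = l0"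
proof -
  obtain a where a: "vweq C Z a"
    "u (t, l, r, b) = (a, vid C (hcod C t), vid C (hdom C b), vid C (hcod C b))"
    using u_components[OF s] by blast
  have "u (t, l, r, b) \<in> Hom (square_cat C) (to (j_o (t, l, r, b))) (t, l, r, b)"
    using u_natural s unfolding is_nat_trans_def by simp
  then have H: "vdom C a = hdom C t0" "vcod C a = hdom C t" "sq C t0 a (vid C (hcod C t)) t"
    "vcomp C l a = vcomp C (vid C (hdom C b)) l0"
    using a(2) rb by (auto simp: j_o_def)
  obtain t' l' where "to (r, b) = (t', l', r, b)" "sq C t' l' r b"
    using cospan_completion sq_boundary[OF s] by blast
  with rb have "l0 \<in> ver C" "vcod C l0 = hdom C b"
    using sq_boundary by auto
  have "vcomp C l a = l0"
    using H(4) \<open>l0 \<in> ver C\<close> \<open>vcod C l0 = hdom C b\<close> vcomp_vid_left by metis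
  with a H(1-3) show thesis
    using that by blast
qed

lemma vweq_left_of_sq:
  assumes s: "sq C t l r b" and r: "vweq C Z r"
  shows "vweq C Z l"
proof -
  have bd: "t \<in> hor C" "b \<in> hor C" "l \<in> ver C" "r \<in> ver C" "vdom C l = hdom C t"
    "vdom C r = hcod C t" "vcod C l = hdom C b" "vcod C r = hcod C b"
    using sq_boundary[OF s] by auto
  define Q where "Q = vcod C l"
  have "Q \<in> obj C"
    using vdom_vcod bd unfolding Q_def by blast
  then have hQ: "hinit C Z Q \<in> hor C" "hdom C (hinit C Z Q) = Z" "hcod C (hinit C Z Q) = Q"
    using hinit by blast+
  \<comment> \<open>Complete \<open>l\<close> to a square \<open>F\<close> over \<open>O\<close>; pasting \<open>F\<close> to the left of the given square
    and comparing the counits there and at the weak-equivalence square of \<open>r\<close> shows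
    that the left edge \<open>k\<close> of \<open>F\<close> is a weak equivalence.\<close>
  obtain x k where F: "sq C x k l (hinit C Z Q)"
    using cospan_completion[of l "hinit C Z Q"] bd hQ unfolding Q_def by metis
  have Fbd: "x \<in> hor C" "k \<in> ver C" "vdom C k = hdom C x" "hcod C x = vdom C l" "vcod C k = Z"
    using sq_boundary[OF F] hQ by auto
  have bottom: "hcomp C b (hinit C Z Q) = hinit C Z (vcod C r)"
    using hinit_unique hcomp[of "hinit C Z Q" b] hQ bd unfolding Q_def by metis
  have XF: "sq C (hcomp C t x) k r (hinit C Z (vcod C r))"
    using sq_hcomp[OF F s] bottom by simp
  have R: "sq C (hinit C Z (vdom C r)) (vid C Z) r (hinit C Z (vcod C r))"
    using r unfolding vweq_def by blast
  obtain t0 l0 where K: "to (r, hinit C Z (vcod C r)) = (t0, l0, r, hinit C Z (vcod C r))"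
    using cospan_completion sq_boundary[OF R] by blast
  obtain a1 where a1: "vweq C Z a1" "vcod C a1 = hdom C (hcomp C t x)" "vcomp C k a1 = l0"
    using counit_component[OF XF K] by metis
  obtain a2 where a2: "vweq C Z a2" "vcod C a2 = hdom C (hinit C Z (vdom C r))" "vcomp C (vid C Z) a2 = l0"
    using counit_component[OF R K] by metis
  have "a2 = l0"
    using a2 hinit vdom_vcod bd vcomp_vid_left unfolding vweq_def by metis
  with a2 have "vweq C Z (vcomp C k a1)"
    using a1 by simp
  moreover have "vcod C a1 = vdom C k"
    using a1(2) hcomp[of x t] Fbd bd by simp
  ultimately have "vweq C Z k"
    using vweq_cancel_right Fbd a1 by blast
  then show ?thesis
    using vweq_right_of_sq[OF F] hQ by blast
qed

lemma square_hom_eqI: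
  assumes X: "sq C t l r b" and Y: "sq C t' l' r' b'"
    and f: "(fa, fb, fc, fd) \<in> Hom (square_cat C) (t, l, r, b) (t', l', r', b')"
    and f': "(fa', fb, fc, fd) \<in> Hom (square_cat C) (t, l, r, b) (t', l', r', b')"
  shows "fa = fa'"
proof -
  obtain t0 l0 where K: "to (r, b) = (t0, l0, r, b)"
    using cospan_completion sq_boundary[OF X] by blast
  obtain a where a: "vweq C Z a" "u (t, l, r, b) = (a, vid C (hcod C t), vid C (hdom C b), vid C (hcod C b))"
    "vcod C a = hdom C t"
    using counit_component[OF X K] by metis
  have nat: "Cmp (square_cat C) (u (t', l', r', b')) (tm (r, b) (r', b') (fb, fc, fd))
      = Cmp (square_cat C) G (u (t, l, r, b))"
    if "G \<in> Hom (square_cat C) (t, l, r, b) (t', l', r', b')"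
      "j_m (t, l, r, b) (t', l', r', b') G = (fb, fc, fd)" for G
    using u_natural X Y that unfolding is_nat_trans_def by (force simp: j_o_def)
  \<comment> \<open>by naturality of \<open>u\<close>, \<open>fa \<circ> a\<close> depends only on \<open>(fb, fc, fd)\<close>\<close>
  have "vcomp C fa a = vcomp C fa' a"
    using nat[OF f] nat[OF f'] a(2) by (simp add: j_m_def)
  moreover obtain a' where "v_inverse C a a'"
    using vweq_inverse[OF a(1)] .
  ultimately show ?thesis
    using vcomp_cancel_inverse_right f f' a(3) by simp
qed

lemma counit_inverse_component:
  assumes s: "sq C t l r b" and rb: "to (r, b) = (t0, l0, r, b)"
  obtains a' where "a' \<in> ver C" "vdom C a' = hdom C t" "vcod C a' = hdom C t0"
    "sq C t a' (vid C (hcod C t)) t0" "vcomp C l0 a' = l"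
proof -
  obtain a where a: "vweq C Z a" "vdom C a = hdom C t0" "vcod C a = hdom C t"
    "sq C t0 a (vid C (hcod C t)) t" "vcomp C l a = l0"
    using counit_component[OF s rb] by metis
  obtain a' where a': "v_inverse C a a'"
    using vweq_inverse[OF a(1)] by blast
  have a'w: "a \<in> ver C" "a' \<in> ver C" "vdom C a' = vcod C a" "vcod C a' = vdom C a"
    "vcomp C a a' = vid C (vcod C a)"
    using a' unfolding v_inverse_def by auto
  have bd: "t \<in> hor C" "l \<in> ver C" "vdom C l = hdom C t"
    using sq_boundary[OF s] by auto
  have "sq C t a' (vid C (hcod C t)) t0"
    using sq_transpose[OF a(4) a' v_inverse_vid] hdom_hcod bd by blast
  moreover have "vcomp C l0 a' = vcomp C l (vcomp C a a')"
    using vcomp_assoc[OF a'w(2) a'w(1) bd(2)] a(5) a'w a bd by simp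
  then have "vcomp C l0 a' = l"
    using a'w a bd vcomp_vid_right[OF bd(2)] by simp
  ultimately show thesis
    using that a'w a by simp
qed

lemma section_hom:
  assumes \<phi>: "(fb, fc, fd) \<in> Hom (cospan_cat C) (r, b) (r', b')"
    and rb: "(r, b) \<in> Ob (cospan_cat C)" "(r', b') \<in> Ob (cospan_cat C)"
    and K: "to (r, b) = (t0, l0, r, b)" and K': "to (r', b') = (t1, l1, r', b')"
  obtains ta where "tm (r, b) (r', b') (fb, fc, fd) = (ta, fb, fc, fd)"
    "(ta, fb, fc, fd) \<in> Hom (square_cat C) (t0, l0, r, b) (t1, l1, r', b')"
proof -
  have "tm (r, b) (r', b') (fb, fc, fd) \<in> Hom (square_cat C) (t0, l0, r, b) (t1, l1, r', b')"
    using t_functor rb \<phi> K K' unfolding is_functor_def by metis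
  moreover obtain ta where "tm (r, b) (r', b') (fb, fc, fd) = (ta, fb, fc, fd)"
    using tm_section[OF rb \<phi>] K K' by (cases "tm (r, b) (r', b') (fb, fc, fd)") (simp add: j_m_def)
  ultimately show thesis
    using that by simp
qed

lemma square_hom_lift:
  assumes X: "sq C t l r b" and Y: "sq C t' l' r' b'"
    and \<phi>: "(fb, fc, fd) \<in> Hom (cospan_cat C) (r, b) (r', b')"
  obtains fa where "(fa, fb, fc, fd) \<in> Hom (square_cat C) (t, l, r, b) (t', l', r', b')"
proof -
  have bd: "l \<in> ver C" "vcod C l = hdom C b" "l' \<in> ver C" "vdom C l' = hdom C t'"
    using sq_boundary[OF X] sq_boundary[OF Y] by auto
  have \<phi>w: "fb \<in> ver C" "fc \<in> ver C" "fd \<in> ver C" "vdom C fb = hcod C t" "vcod C fb = hcod C t'"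
    "vdom C fc = hdom C b" "vcod C fc = hdom C b'" "sq C b fc fd b'" "vdom C fd = hcod C b"
    "vcod C fd = hcod C b'" "vcomp C r' fb = vcomp C fd r"
    using \<phi> sq_boundary[OF X] sq_boundary[OF Y] by auto
  obtain t0 l0 where K: "to (r, b) = (t0, l0, r, b)" "sq C t0 l0 r b"
    using cospan_completion sq_boundary[OF X] by blast
  obtain t1 l1 where K': "to (r', b') = (t1, l1, r', b')" "sq C t1 l1 r' b'"
    using cospan_completion sq_boundary[OF Y] by blast
  have l0: "l0 \<in> ver C" "vdom C l0 = hdom C t0" "vcod C l0 = hdom C b"
    and l1: "l1 \<in> ver C" "vdom C l1 = hdom C t1"
    using sq_boundary[OF K(2)] sq_boundary[OF K'(2)] by auto
  obtain a' where a': "a' \<in> ver C" "vdom C a' = hdom C t" "vcod C a' = hdom C t0"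
    "sq C t a' (vid C (hcod C t)) t0" "vcomp C l0 a' = l"
    using counit_inverse_component[OF X K(1)] by metis
  obtain a1 where a1: "vdom C a1 = hdom C t1" "vcod C a1 = hdom C t'"
    "sq C t1 a1 (vid C (hcod C t')) t'" "vcomp C l' a1 = l1"
    using counit_component[OF Y K'(1)] by metis
  have a1w: "a1 \<in> ver C"
    using sq_boundary[OF a1(3)] by blast
  obtain ta where ta: "ta \<in> ver C" "vdom C ta = hdom C t0" "vcod C ta = hdom C t1"
    "sq C t0 ta fb t1" "vcomp C l1 ta = vcomp C fc l0"
    using section_hom[OF \<phi> _ _ K(1) K'(1)] sq_boundary[OF X] sq_boundary[OF Y] by auto
  \<comment> \<open>transport the lift \<open>ta\<close> between the completions along the counit components\<close>
  define fa where "fa = vcomp C a1 (vcomp C ta a')"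
  have "sq C t fa (vcomp C (vid C (hcod C t')) (vcomp C fb (vid C (hcod C t)))) t'"
    unfolding fa_def using sq_vcomp[OF sq_vcomp[OF a'(4) ta(4)] a1(3)] .
  then have sq_fa: "sq C t fa fb t'"
    using \<phi>w vcomp_vid_left[OF \<phi>w(1)] vcomp_vid_right[OF \<phi>w(1)] by simp
  have ta_a': "vcomp C ta a' \<in> ver C" "vcod C (vcomp C ta a') = hdom C t1"
    using vcomp[of a' ta] a' ta by auto
  have "vcomp C l' fa = vcomp C (vcomp C l' a1) (vcomp C ta a')"
    unfolding fa_def using vcomp_assoc[OF ta_a'(1) a1w bd(3)] ta_a' a1 bd by simp
  also have "\<dots> = vcomp C (vcomp C l1 ta) a'"
    using vcomp_assoc[OF a'(1) ta(1) l1(1)] a1(4) a' ta l1 by simp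
  also have "\<dots> = vcomp C fc l"
    using vcomp_assoc[OF a'(1) l0(1) \<phi>w(2)] ta(5) a' l0 \<phi>w by simp
  finally have "vcomp C l' fa = vcomp C fc l" .
  moreover have "fa \<in> ver C" "vdom C fa = hdom C t" "vcod C fa = hdom C t'"
    using sq_boundary[OF sq_fa] by auto
  ultimately show thesis
    using that[of fa] sq_fa \<phi>w sq_boundary[OF X] sq_boundary[OF Y] by simp
qed

end

section \<open>The categories \<open>S\<^sub>n\<close> and \<open>V\<^sub>n\<close> and the functor \<open>U\<^sub>n\<close>\<close>

lemma Sn_objD:
  assumes "(A, hA, vA) \<in> Sn_obj C Z n"
  shows "j \<le> n \<Longrightarrow> A j j = Z"
    and "j \<le> k \<Longrightarrow> k \<le> n \<Longrightarrow> A j k \<in> obj C"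
    and "j \<le> k \<Longrightarrow> k < n \<Longrightarrow> hA j k \<in> hor C"
    and "j \<le> k \<Longrightarrow> k < n \<Longrightarrow> hdom C (hA j k) = A j k"
    and "j \<le> k \<Longrightarrow> k < n \<Longrightarrow> hcod C (hA j k) = A j (Suc k)"
    and "j < k \<Longrightarrow> k \<le> n \<Longrightarrow> vA j k \<in> ver C"
    and "j < k \<Longrightarrow> k \<le> n \<Longrightarrow> vdom C (vA j k) = A j k"
    and "j < k \<Longrightarrow> k \<le> n \<Longrightarrow> vcod C (vA j k) = A (Suc j) k"
    and "j < k \<Longrightarrow> k < n \<Longrightarrow> sq C (hA j k) (vA j k) (vA j (Suc k)) (hA (Suc j) k)"
  using assms by (auto simp: Sn_obj_def)

lemma Sn_homD:
  assumes "f \<in> Sn_hom C Z n (A, hA, vA) (A', hA', vA')"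
  shows "\<not> (j \<le> k \<and> k \<le> n) \<Longrightarrow> f j k = undefined"
    and "j \<le> k \<Longrightarrow> k \<le> n \<Longrightarrow> f j k \<in> ver C"
    and "j \<le> k \<Longrightarrow> k \<le> n \<Longrightarrow> vdom C (f j k) = A j k"
    and "j \<le> k \<Longrightarrow> k \<le> n \<Longrightarrow> vcod C (f j k) = A' j k"
    and "j \<le> k \<Longrightarrow> k \<le> n \<Longrightarrow> vweq C Z (f j k)"
    and "j \<le> k \<Longrightarrow> k < n \<Longrightarrow> sq C (hA j k) (f j k) (f j (Suc k)) (hA' j k)"
    and "j < k \<Longrightarrow> k \<le> n \<Longrightarrow> vcomp C (vA' j k) (f j k) = vcomp C (f (Suc j) k) (vA j k)"
  using assms by (auto simp: Sn_hom_def)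

lemma Vn_objD:
  assumes "(a, p) \<in> Vn_obj C Z n"
  shows "\<not> (1 \<le> i \<and> i \<le> n) \<Longrightarrow> a i = undefined"
    and "\<not> (1 \<le> i \<and> i \<le> n) \<Longrightarrow> p i = undefined"
    and "1 \<le> i \<Longrightarrow> i \<le> n \<Longrightarrow> a i \<in> obj C"
    and "1 \<le> i \<Longrightarrow> i \<le> n \<Longrightarrow> p i \<in> ver C"
    and "1 \<le> i \<Longrightarrow> i \<le> n \<Longrightarrow> vdom C (p i) = a i"
    and "1 \<le> i \<Longrightarrow> i < n \<Longrightarrow> vcod C (p i) = a (Suc i)"
    and "1 \<le> n \<Longrightarrow> vcod C (p n) = Z"
  using assms by (auto simp: Vn_obj_def)

lemma Vn_homD:
  assumes "g \<in> Vn_hom C Z n (a, p) (a', p')"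
  shows "\<not> (1 \<le> i \<and> i \<le> n) \<Longrightarrow> g i = undefined"
    and "1 \<le> i \<Longrightarrow> i \<le> n \<Longrightarrow> g i \<in> ver C"
    and "1 \<le> i \<Longrightarrow> i \<le> n \<Longrightarrow> vdom C (g i) = a i"
    and "1 \<le> i \<Longrightarrow> i \<le> n \<Longrightarrow> vcod C (g i) = a' i"
    and "1 \<le> i \<Longrightarrow> i \<le> n \<Longrightarrow> vweq C Z (g i)"
    and "1 \<le> i \<Longrightarrow> i < n \<Longrightarrow> vcomp C (p' i) (g i) = vcomp C (g (Suc i)) (p i)"
    and "1 \<le> n \<Longrightarrow> vcomp C (p' n) (g n) = vcomp C (vid C Z) (p n)"
  using assms by (auto simp: Vn_hom_def)

lemma Vn_hom_UnD:
  assumes g: "g \<in> Vn_hom C Z n (Un_o n (A, hA, vA)) (Un_o n (A', hA', vA'))" and j: "j < n"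
  shows "g (Suc j) \<in> ver C" "vdom C (g (Suc j)) = A j n" "vcod C (g (Suc j)) = A' j n"
    "vweq C Z (g (Suc j))"
    and "vcomp C (vA' j n) (g (Suc j)) =
           vcomp C (if Suc j = n then vid C Z else g (Suc (Suc j))) (vA j n)"
proof -
  have "g \<in> Vn_hom C Z n
      (\<lambda>i. if 1 \<le> i \<and> i \<le> n then A (i - 1) n else undefined,
       \<lambda>i. if 1 \<le> i \<and> i \<le> n then vA (i - 1) n else undefined)
      (\<lambda>i. if 1 \<le> i \<and> i \<le> n then A' (i - 1) n else undefined,
       \<lambda>i. if 1 \<le> i \<and> i \<le> n then vA' (i - 1) n else undefined)"
    using g by (simp add: Un_o_def)
  note gs = Vn_homD[OF this]
  show "g (Suc j) \<in> ver C" "vdom C (g (Suc j)) = A j n" "vcod C (g (Suc j)) = A' j n"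
    "vweq C Z (g (Suc j))"
    using gs(2-5)[of "Suc j"] j by simp_all
  show "vcomp C (vA' j n) (g (Suc j)) =
      vcomp C (if Suc j = n then vid C Z else g (Suc (Suc j))) (vA j n)"
    using gs(6)[of "Suc j"] gs(7) j by (cases "Suc j = n") auto
qed

context squares_category
begin

lemma Sn_hom_diagonal:
  assumes "f \<in> Sn_hom C Z n (A, hA, vA) (A', hA', vA')"
    and "(A, hA, vA) \<in> Sn_obj C Z n" "(A', hA', vA') \<in> Sn_obj C Z n" "j \<le> n"
  shows "f j j = vid C Z"
  using vid_O_unique Sn_homD(2-4)[OF assms(1)] Sn_objD(1)[OF assms(2)] Sn_objD(1)[OF assms(3)] assms(4)
  by simp

lemma Sn_cat_Id_Hom:
  assumes "X \<in> Ob (Sn_cat C Z n)"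
  shows "Id (Sn_cat C Z n) X \<in> Hom (Sn_cat C Z n) X X"
proof -
  obtain A hA vA where X: "X = (A, hA, vA)" "(A, hA, vA) \<in> Sn_obj C Z n"
    using assms by (cases X) (simp add: Sn_cat_def)
  note Xs = Sn_objD[OF X(2)]
  have "sq C (hA j k) (vid C (A j k)) (vid C (A j (Suc k))) (hA j k)" if "j \<le> k" "k < n" for j k
    using sq_vid[OF Xs(3)] Xs(4,5) that by simp
  moreover have "vcomp C (vA j k) (vid C (A j k)) = vcomp C (vid C (A (Suc j) k)) (vA j k)"
    if "j < k" "k \<le> n" for j k
    using vcomp_vid_left[OF Xs(6)] vcomp_vid_right[OF Xs(6)] Xs(7,8) that by simp
  ultimately show ?thesis
    using X Xs(2) vid vweq_vid by (auto simp: Sn_cat_def Sn_hom_def)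
qed

lemma Sn_cat_Cmp_Hom:
  assumes "X \<in> Ob (Sn_cat C Z n)" "Y \<in> Ob (Sn_cat C Z n)" "W \<in> Ob (Sn_cat C Z n)"
    and "f \<in> Hom (Sn_cat C Z n) X Y" "g \<in> Hom (Sn_cat C Z n) Y W"
  shows "Cmp (Sn_cat C Z n) g f \<in> Hom (Sn_cat C Z n) X W"
proof -
  obtain A hA vA A' hA' vA' A'' hA'' vA'' where
    XYW: "X = (A, hA, vA)" "Y = (A', hA', vA')" "W = (A'', hA'', vA'')"
    by (cases X, cases Y, cases W) auto
  have X: "(A, hA, vA) \<in> Sn_obj C Z n" and Y: "(A', hA', vA') \<in> Sn_obj C Z n"
    and W: "(A'', hA'', vA'') \<in> Sn_obj C Z n"
    and f: "f \<in> Sn_hom C Z n (A, hA, vA) (A', hA', vA')"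
    and g: "g \<in> Sn_hom C Z n (A', hA', vA') (A'', hA'', vA'')"
    using assms XYW by (simp_all add: Sn_cat_def)
  note fs = Sn_homD[OF f] and gs = Sn_homD[OF g]
  have "vcomp C (g j k) (f j k) \<in> ver C \<and> vdom C (vcomp C (g j k) (f j k)) = A j k \<and>
      vcod C (vcomp C (g j k) (f j k)) = A'' j k \<and> vweq C Z (vcomp C (g j k) (f j k))"
    if "j \<le> k" "k \<le> n" for j k
    using vcomp[OF fs(2) gs(2)] vweq_vcomp[OF fs(5) gs(5)] fs(3,4) gs(3,4) that by simp
  moreover have "sq C (hA j k) (vcomp C (g j k) (f j k)) (vcomp C (g j (Suc k)) (f j (Suc k))) (hA'' j k)"
    if "j \<le> k" "k < n" for j k
    using sq_vcomp[OF fs(6) gs(6)] that by simp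
  moreover have "vcomp C (vA'' j k) (vcomp C (g j k) (f j k)) =
      vcomp C (vcomp C (g (Suc j) k) (f (Suc j) k)) (vA j k)"
    if "j < k" "k \<le> n" for j k
    by (rule vcomp_paste)
      (use that fs gs Sn_objD(6-8)[OF X] Sn_objD(6-8)[OF Y] Sn_objD(6-8)[OF W] in auto)
  ultimately show ?thesis
    using XYW fs(1) by (auto simp: Sn_cat_def Sn_hom_def)
qed

lemma Vn_cat_Id_Hom:
  assumes "Y \<in> Ob (Vn_cat C Z n)"
  shows "Id (Vn_cat C Z n) Y \<in> Hom (Vn_cat C Z n) Y Y"
proof -
  obtain a p where Y: "Y = (a, p)" "(a, p) \<in> Vn_obj C Z n"
    using assms by (cases Y) (simp add: Vn_cat_def)
  note Ys = Vn_objD[OF Y(2)]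
  have "vcomp C (p i) (vid C (a i)) = vcomp C (vid C (a (Suc i))) (p i)" if "1 \<le> i" "i < n" for i
  proof -
    have "p i \<in> ver C"
      using Ys(4) that by simp
    then show ?thesis
      using vcomp_vid_left vcomp_vid_right Ys(5,6) that by (metis less_imp_le)
  qed
  moreover have "vcomp C (p n) (vid C (a n)) = vcomp C (vid C Z) (p n)" if "1 \<le> n"
  proof -
    have "p n \<in> ver C"
      using Ys(4) that by simp
    then show ?thesis
      using vcomp_vid_left vcomp_vid_right Ys(5,7) that by (metis order_refl)
  qed
  ultimately show ?thesis
    using Y Ys(3) vid vweq_vid by (auto simp: Vn_cat_def Vn_hom_def)
qed

lemma Vn_cat_Id_left:
  assumes "X \<in> Ob (Vn_cat C Z n)" "Y \<in> Ob (Vn_cat C Z n)" "g \<in> Hom (Vn_cat C Z n) X Y"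
  shows "Cmp (Vn_cat C Z n) (Id (Vn_cat C Z n) Y) g = g"
proof -
  obtain a p a' p' where XY: "X = (a, p)" "Y = (a', p')" by (cases X, cases Y) auto
  then have g: "g \<in> Vn_hom C Z n (a, p) (a', p')"
    using assms by (simp add: Vn_cat_def)
  show ?thesis
  proof (rule ext)
    fix i
    show "Cmp (Vn_cat C Z n) (Id (Vn_cat C Z n) Y) g i = g i"
      using XY Vn_homD(1,4)[OF g, of i] vcomp_vid_left[OF Vn_homD(2)[OF g, of i]]
      by (auto simp: Vn_cat_def)
  qed
qed

lemma Vn_cat_Id_right:
  assumes "X \<in> Ob (Vn_cat C Z n)" "Y \<in> Ob (Vn_cat C Z n)" "g \<in> Hom (Vn_cat C Z n) X Y"
  shows "Cmp (Vn_cat C Z n) g (Id (Vn_cat C Z n) X) = g"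
proof -
  obtain a p a' p' where XY: "X = (a, p)" "Y = (a', p')" by (cases X, cases Y) auto
  then have g: "g \<in> Vn_hom C Z n (a, p) (a', p')"
    using assms by (simp add: Vn_cat_def)
  show ?thesis
  proof (rule ext)
    fix i
    show "Cmp (Vn_cat C Z n) g (Id (Vn_cat C Z n) X) i = g i"
      using XY Vn_homD(1,3)[OF g, of i] vcomp_vid_right[OF Vn_homD(2)[OF g, of i]]
      by (auto simp: Vn_cat_def)
  qed
qed

lemma Un_o_Vn_obj:
  assumes X: "(A, hA, vA) \<in> Sn_obj C Z n"
  shows "Un_o n (A, hA, vA) \<in> Vn_obj C Z n"
proof -
  note Xs = Sn_objD[OF X]
  have "vcod C (vA (i - 1) n) = A i n" if "1 \<le> i" "i \<le> n" for i
    using Xs(8)[of "i - 1" n] that by simp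
  then show ?thesis
    using Xs(1)[of n] Xs(2,6,7) by (auto simp: Vn_obj_def Un_o_def)
qed

lemma Un_m_Vn_hom:
  assumes X: "(A, hA, vA) \<in> Sn_obj C Z n" and Y: "(A', hA', vA') \<in> Sn_obj C Z n"
    and f: "f \<in> Sn_hom C Z n (A, hA, vA) (A', hA', vA')"
  shows "Un_m n S T f \<in> Vn_hom C Z n (Un_o n (A, hA, vA)) (Un_o n (A', hA', vA'))"
proof -
  note fs = Sn_homD[OF f]
  have "vcomp C (vA' (i - 1) n) (f (i - 1) n) = vcomp C (f i n) (vA (i - 1) n)"
    if "1 \<le> i" "i \<le> n" for i
    using fs(7)[of "i - 1" n] that by simp
  then show ?thesis
    using fs(2-5) Sn_hom_diagonal[OF f X Y, of n]
    by (auto simp: Vn_hom_def Un_o_def Un_m_def)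
qed

lemma Un_functor: "is_functor (Sn_cat C Z n) (Vn_cat C Z n) (Un_o n) (Un_m n)"
  unfolding is_functor_def
proof (intro conjI ballI)
  show "Un_o n X \<in> Ob (Vn_cat C Z n)" if "X \<in> Ob (Sn_cat C Z n)" for X
    using that Un_o_Vn_obj by (cases X) (auto simp: Sn_cat_def Vn_cat_def)
  show "Un_m n X Y f \<in> Hom (Vn_cat C Z n) (Un_o n X) (Un_o n Y)"
    if "X \<in> Ob (Sn_cat C Z n)" "Y \<in> Ob (Sn_cat C Z n)" "f \<in> Hom (Sn_cat C Z n) X Y" for X Y f
    using that Un_m_Vn_hom by (cases X, cases Y) (auto simp: Sn_cat_def Vn_cat_def)
  show "Un_m n X X (Id (Sn_cat C Z n) X) = Id (Vn_cat C Z n) (Un_o n X)" for X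
    by (cases X) (auto simp: Un_m_def Un_o_def Sn_cat_def Vn_cat_def intro!: ext)
  show "Un_m n X W (Cmp (Sn_cat C Z n) g f) = Cmp (Vn_cat C Z n) (Un_m n Y W g) (Un_m n X Y f)"
    for X Y W f g
    by (auto simp: Un_m_def Sn_cat_def Vn_cat_def intro!: ext)
qed

end

section \<open>Recursion and induction over a staircase\<close>

function staircase_rec ::
  "nat \<Rightarrow> (nat \<Rightarrow> 'a) \<Rightarrow> (nat \<Rightarrow> 'a \<Rightarrow> 'a) \<Rightarrow> (nat \<Rightarrow> nat \<Rightarrow> 'a \<Rightarrow> 'a \<Rightarrow> 'a \<Rightarrow> 'a)
     \<Rightarrow> nat \<Rightarrow> nat \<Rightarrow> 'a"
where
  "staircase_rec n column diagonal cell j k =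
     (if n \<le> k then column j
      else if k \<le> j then diagonal j (staircase_rec n column diagonal cell j (Suc j))
      else cell j k (staircase_rec n column diagonal cell j (Suc k))
                    (staircase_rec n column diagonal cell (Suc j) k)
                    (staircase_rec n column diagonal cell (Suc j) (Suc k)))"
  by pat_completeness auto
termination
  by (relation "measures [\<lambda>(n, _, _, _, _, k). n - k, \<lambda>(_, _, _, _, j, k). k - j]") auto

declare staircase_rec.simps [simp del]

lemma staircase_rec_column: "staircase_rec n column diagonal cell j n = column j"
  by (simp add: staircase_rec.simps)

lemma staircase_rec_diagonal:
  "j < n \<Longrightarrow> staircase_rec n column diagonal cell j j =
     diagonal j (staircase_rec n column diagonal cell j (Suc j))"
  by (simp add: staircase_rec.simps)

lemma staircase_rec_cell:
  "\<lbrakk>j < k; k < n\<rbrakk> \<Longrightarrow> staircase_rec n column diagonal cell j k =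
     cell j k (staircase_rec n column diagonal cell j (Suc k))
              (staircase_rec n column diagonal cell (Suc j) k)
              (staircase_rec n column diagonal cell (Suc j) (Suc k))"
  by (subst staircase_rec.simps) simp

lemma staircase_induct [consumes 2, case_names column diagonal cell]:
  assumes "j \<le> k" "k \<le> n"
    and column: "\<And>j. j \<le> n \<Longrightarrow> P j n"
    and diagonal: "\<And>j. j < n \<Longrightarrow> P j (Suc j) \<Longrightarrow> P j j"
    and cell: "\<And>j k. \<lbrakk>j < k; k < n; P j (Suc k); P (Suc j) k; P (Suc j) (Suc k)\<rbrakk> \<Longrightarrow> P j k"
  shows "P j k"
  using assms(1,2)
proof (induction "(n - j) + (n - k)" arbitrary: j k rule: less_induct)
  case less
  consider "k = n" | "j = k" "k < n" | "j < k" "k < n"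
    using less.prems by linarith
  then show ?case
  proof cases
    case 1
    then show ?thesis using column less.prems by simp
  next
    case 2
    then show ?thesis using diagonal less.hyps[of j "Suc j"] by simp
  next
    case 3
    then show ?thesis using cell less.hyps by simp
  qed
qed

context isostable_squares
begin

lemma Sn_hom_cell:
  assumes X: "(A, hA, vA) \<in> Sn_obj C Z n" and Y: "(A', hA', vA') \<in> Sn_obj C Z n"
    and f: "f \<in> Sn_hom C Z n (A, hA, vA) (A', hA', vA')" and jk: "j < k" "k < n"
  shows "(f j k, f j (Suc k), f (Suc j) k, f (Suc j) (Suc k)) \<in> Hom (square_cat C)
           (hA j k, vA j k, vA j (Suc k), hA (Suc j) k) (hA' j k, vA' j k, vA' j (Suc k), hA' (Suc j) k)"
  using Sn_objD[OF X] Sn_objD[OF Y] Sn_homD[OF f] jk by simp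

lemma Un_faithful:
  assumes X: "(A, hA, vA) \<in> Sn_obj C Z n" and Y: "(A', hA', vA') \<in> Sn_obj C Z n"
    and f: "f \<in> Sn_hom C Z n (A, hA, vA) (A', hA', vA')"
    and f': "f' \<in> Sn_hom C Z n (A, hA, vA) (A', hA', vA')"
    and eq: "Un_m n S T f = Un_m n S T f'"
  shows "f = f'"
proof (intro ext)
  fix j k
  show "f j k = f' j k"
  proof (cases "j \<le> k \<and> k \<le> n")
    case False
    then show ?thesis using Sn_homD(1)[OF f] Sn_homD(1)[OF f'] by simp
  next
    case True
    then have "j \<le> k" "k \<le> n" by auto
    then show ?thesis
    proof (induction rule: staircase_induct)
      case (column j)
      show ?case
      proof (cases "j = n")
        case True
        then show ?thesis using Sn_hom_diagonal[OF f X Y] Sn_hom_diagonal[OF f' X Y] by simp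
      next
        case False
        then show ?thesis using fun_cong[OF eq, of "Suc j"] column by (simp add: Un_m_def)
      qed
    next
      case (diagonal j)
      then show ?case using Sn_hom_diagonal[OF f X Y] Sn_hom_diagonal[OF f' X Y] by simp
    next
      case (cell j k)
      then show ?case
        using square_hom_eqI[OF Sn_objD(9)[OF X] Sn_objD(9)[OF Y] Sn_hom_cell[OF X Y f]]
          Sn_hom_cell[OF X Y f'] by simp
    qed
  qed
qed

definition staircase_hom_lift ::
  "nat \<Rightarrow> (nat \<Rightarrow> nat \<Rightarrow> 'h) \<Rightarrow> (nat \<Rightarrow> nat \<Rightarrow> 'v) \<Rightarrow> (nat \<Rightarrow> nat \<Rightarrow> 'h) \<Rightarrow> (nat \<Rightarrow> nat \<Rightarrow> 'v)
     \<Rightarrow> (nat \<Rightarrow> 'v) \<Rightarrow> nat \<Rightarrow> nat \<Rightarrow> 'v"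
where
  \<comment> \<open>\<open>V\<^sub>n\<close> is indexed from 1: the entry \<open>(j, n)\<close> of the column is \<open>g (Suc j)\<close>\<close>
  "staircase_hom_lift n hA vA hA' vA' g = staircase_rec n
     (\<lambda>j. if j = n then vid C Z else g (Suc j))
     (\<lambda>_ _. vid C Z)
     (\<lambda>j k tb tc td. SOME ta. (ta, tb, tc, td) \<in> Hom (square_cat C)
        (hA j k, vA j k, vA j (Suc k), hA (Suc j) k) (hA' j k, vA' j k, vA' j (Suc k), hA' (Suc j) k))"

lemma staircase_hom_lift_spec:
  assumes X: "(A, hA, vA) \<in> Sn_obj C Z n" and Y: "(A', hA', vA') \<in> Sn_obj C Z n"
    and g: "g \<in> Vn_hom C Z n (Un_o n (A, hA, vA)) (Un_o n (A', hA', vA'))"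
    and jk: "j \<le> k" "k \<le> n"
  defines "L \<equiv> staircase_hom_lift n hA vA hA' vA' g"
  shows "L j k \<in> ver C \<and> vdom C (L j k) = A j k \<and> vcod C (L j k) = A' j k \<and> vweq C Z (L j k) \<and>
      (k < n \<longrightarrow> sq C (hA j k) (L j k) (L j (Suc k)) (hA' j k)) \<and>
      (j < k \<longrightarrow> vcomp C (vA' j k) (L j k) = vcomp C (L (Suc j) k) (vA j k))"
  using jk
proof (induction rule: staircase_induct)
  case (column j)
  have L_column: "L i n = (if i = n then vid C Z else g (Suc i))" for i
    by (simp add: L_def staircase_hom_lift_def staircase_rec_column)
  show ?case
  proof (cases "j = n")
    case True
    then show ?thesis
      using Sn_objD(1)[OF X] Sn_objD(1)[OF Y] vid O_obj vweq_vid by (simp add: L_column)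
next
    case False
    then show ?thesis
      using Vn_hom_UnD[OF g, of j] column by (simp add: L_column)
  qed
next
  case (diagonal j)
  have "hA j j = hinit C Z (A j (Suc j))"
    using hinit_unique[OF Sn_objD(3)[OF X]] Sn_objD(1,4,5)[OF X] diagonal by simp
  moreover have "hA' j j = hinit C Z (A' j (Suc j))"
    using hinit_unique[OF Sn_objD(3)[OF Y]] Sn_objD(1,4,5)[OF Y] diagonal by simp
  moreover have "sq C (hinit C Z (A j (Suc j))) (vid C Z) (L j (Suc j)) (hinit C Z (A' j (Suc j)))"
    using diagonal.IH unfolding vweq_def by (elim conjE) simp
  moreover have "L j j = vid C Z"
    using diagonal by (simp add: L_def staircase_hom_lift_def staircase_rec_diagonal)
  ultimately show ?case
    using diagonal Sn_objD(1)[OF X] Sn_objD(1)[OF Y] vid O_obj vweq_vid by simp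
next
  case (cell j k)
  let ?X = "(hA j k, vA j k, vA j (Suc k), hA (Suc j) k)"
  let ?Y = "(hA' j k, vA' j k, vA' j (Suc k), hA' (Suc j) k)"
  have "(L j (Suc k), L (Suc j) k, L (Suc j) (Suc k)) \<in>
      Hom (cospan_cat C) (vA j (Suc k), hA (Suc j) k) (vA' j (Suc k), hA' (Suc j) k)"
    using cell Sn_objD(3-8)[OF X] Sn_objD(3-8)[OF Y] by simp
  then obtain ta where "(ta, L j (Suc k), L (Suc j) k, L (Suc j) (Suc k)) \<in> Hom (square_cat C) ?X ?Y"
    by (rule square_hom_lift[OF Sn_objD(9)[OF X cell.hyps] Sn_objD(9)[OF Y cell.hyps]])
  moreover have
    "L j k = (SOME ta. (ta, L j (Suc k), L (Suc j) k, L (Suc j) (Suc k)) \<in> Hom (square_cat C) ?X ?Y)"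
    using cell.hyps by (simp add: L_def staircase_hom_lift_def staircase_rec_cell)
  ultimately have "(L j k, L j (Suc k), L (Suc j) k, L (Suc j) (Suc k)) \<in> Hom (square_cat C) ?X ?Y"
    by (simp only:) (rule someI)
  moreover from this have "sq C (hA j k) (L j k) (L j (Suc k)) (hA' j k)"
    by simp
  then have "vweq C Z (L j k)"
    using vweq_left_of_sq cell.IH(1) by blast
  ultimately show ?case
    using Sn_objD(4)[OF X] Sn_objD(4)[OF Y] cell.hyps by simp
qed

lemma Un_full:
  assumes X: "(A, hA, vA) \<in> Sn_obj C Z n" and Y: "(A', hA', vA') \<in> Sn_obj C Z n"
    and g: "g \<in> Vn_hom C Z n (Un_o n (A, hA, vA)) (Un_o n (A', hA', vA'))"
  obtains f where "f \<in> Sn_hom C Z n (A, hA, vA) (A', hA', vA')" "Un_m n S T f = g"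
proof -
  define L where "L = staircase_hom_lift n hA vA hA' vA' g"
  define f where "f j k = (if j \<le> k \<and> k \<le> n then L j k else undefined)" for j k
  note L = staircase_hom_lift_spec[OF X Y g, folded L_def]
  have "f \<in> Sn_hom C Z n (A, hA, vA) (A', hA', vA')"
    unfolding Sn_hom_def f_def using L by simp
  moreover have "L (i - 1) n = g i" if "1 \<le> i" "i \<le> n" for i
  proof -
    have "i - 1 \<noteq> n" "Suc (i - 1) = i"
      using that by arith+
    then show ?thesis
      by (simp add: L_def staircase_hom_lift_def staircase_rec_column)
  qed
  then have "Un_m n S T f = g"
    using Vn_homD(1)[OF g[unfolded Un_o_def, simplified]] by (auto simp: Un_m_def f_def intro!: ext)
  ultimately show thesis
    using that by blast
qed

definition staircase_fill :: "nat \<Rightarrow> (nat \<Rightarrow> 'v) \<Rightarrow> nat \<Rightarrow> nat \<Rightarrow> 'h \<times> 'v" where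
  \<comment> \<open>the pair \<open>(hA j k, vA j k)\<close> of an object of \<open>S\<^sub>n\<close> with right column \<open>p\<close>\<close>
  "staircase_fill n p = staircase_rec n
     (\<lambda>j. (undefined, p (Suc j)))
     (\<lambda>j x. (hinit C Z (vdom C (snd x)), undefined))
     (\<lambda>j k x y z. SOME tl. sq C (fst tl) (snd tl) (snd x) (fst y))"

lemma staircase_fill_spec:
  assumes Y: "(a, p) \<in> Vn_obj C Z n" and jk: "j \<le> k" "k \<le> n"
  defines "hR \<equiv> \<lambda>j k. fst (staircase_fill n p j k)" and "vR \<equiv> \<lambda>j k. snd (staircase_fill n p j k)"
  defines "AR \<equiv> \<lambda>j k. if j = k then Z else vdom C (vR j k)"
  shows "(j < k \<longrightarrow> vR j k \<in> ver C \<and> vcod C (vR j k) = AR (Suc j) k) \<and>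
    (k < n \<longrightarrow> hR j k \<in> hor C \<and> hdom C (hR j k) = AR j k \<and> hcod C (hR j k) = AR j (Suc k) \<and>
      (j < k \<longrightarrow> sq C (hR j k) (vR j k) (vR j (Suc k)) (hR (Suc j) k)))"
  using jk
proof (induction rule: staircase_induct)
  case (column j)
  have vR_column: "vR i n = p (Suc i)" for i
    by (simp add: vR_def staircase_fill_def staircase_rec_column)
  show ?case
  proof (intro conjI impI)
    assume "j < n"
    then show "vR j n \<in> ver C"
      using Vn_objD(4)[OF Y, of "Suc j"] by (simp add: vR_column)
    show "vcod C (vR j n) = AR (Suc j) n"
      using Vn_objD(5,6)[OF Y, of "Suc (Suc j)"] Vn_objD(6)[OF Y, of "Suc j"] Vn_objD(7)[OF Y] \<open>j < n\<close>
      by (cases "Suc j = n") (auto simp: AR_def vR_column)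
  qed simp_all
next
  case (diagonal j)
  then have "vdom C (vR j (Suc j)) \<in> obj C"
    using vdom_vcod by simp
  moreover have "hR j j = hinit C Z (vdom C (vR j (Suc j)))"
    using diagonal by (simp add: hR_def vR_def staircase_fill_def staircase_rec_diagonal)
  ultimately show ?case
    using diagonal hinit by (simp add: AR_def)
next
  case (cell j k)
  then have "vR j (Suc k) \<in> ver C" "hR (Suc j) k \<in> hor C"
    "vcod C (vR j (Suc k)) = hcod C (hR (Suc j) k)"
    by simp_all
  then obtain t l where "sq C t l (vR j (Suc k)) (hR (Suc j) k)"
    by (rule cospan_completion)
  then have ex: "\<exists>tl. sq C (fst tl) (snd tl) (vR j (Suc k)) (hR (Suc j) k)"
    by (intro exI[of _ "(t, l)"]) simp
  have "staircase_fill n p j k = (SOME tl. sq C (fst tl) (snd tl) (vR j (Suc k)) (hR (Suc j) k))"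
    using cell.hyps by (simp add: hR_def vR_def staircase_fill_def staircase_rec_cell)
  with ex have "sq C (fst (staircase_fill n p j k)) (snd (staircase_fill n p j k))
      (vR j (Suc k)) (hR (Suc j) k)"
    by (simp only:) (rule someI_ex)
  then have "sq C (hR j k) (vR j k) (vR j (Suc k)) (hR (Suc j) k)"
    by (simp add: hR_def vR_def)
  then show ?case
    using sq_boundary cell by (simp add: AR_def)
qed

lemma Un_surjective:
  assumes Y: "(a, p) \<in> Vn_obj C Z n"
  obtains X where "X \<in> Sn_obj C Z n" "Un_o n X = (a, p)"
proof -
  define hR where "hR j k = fst (staircase_fill n p j k)" for j k
  define vR where "vR j k = snd (staircase_fill n p j k)" for j k
  define AR where "AR j k = (if j = k then Z else vdom C (vR j k))" for j k
  note R = staircase_fill_spec[OF Y, folded hR_def vR_def, folded AR_def]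
  define A where "A j k = (if j \<le> k \<and> k \<le> n then AR j k else undefined)" for j k
  define hA where "hA j k = (if j \<le> k \<and> k < n then hR j k else undefined)" for j k
  define vA where "vA j k = (if j < k \<and> k \<le> n then vR j k else undefined)" for j k
  have "A j k \<in> obj C" if "j \<le> k" "k \<le> n" for j k
    using R[OF that] O_obj vdom_vcod that by (auto simp: A_def AR_def)
  then have "(A, hA, vA) \<in> Sn_obj C Z n"
    using R by (auto simp: Sn_obj_def A_def hA_def vA_def AR_def)
  moreover have "vR j n = p (Suc j)" for j
    by (simp add: vR_def staircase_fill_def staircase_rec_column)
  then have "Un_o n (A, hA, vA) = (a, p)"
    using Vn_objD(1,2,5)[OF Y] by (auto simp: Un_o_def A_def vA_def AR_def intro!: ext)
  ultimately show thesis
    using that by blast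
qed

lemma Un_fully_faithful_surjective:
  "fully_faithful_surjective (Sn_cat C Z n) (Vn_cat C Z n) (Un_o n) (Un_m n)"
proof (unfold_locales)
  fix Y assume "Y \<in> Ob (Vn_cat C Z n)"
  then obtain a p where Y: "Y = (a, p)" "(a, p) \<in> Vn_obj C Z n"
    by (cases Y) (simp add: Vn_cat_def)
  obtain X where "X \<in> Sn_obj C Z n" "Un_o n X = (a, p)"
    by (rule Un_surjective[OF Y(2)])
  then show "\<exists>X\<in>Ob (Sn_cat C Z n). Un_o n X = Y"
    using Y(1) by (auto simp: Sn_cat_def)
next
  fix X X' g
  assume X: "X \<in> Ob (Sn_cat C Z n)" and X': "X' \<in> Ob (Sn_cat C Z n)"
    and g: "g \<in> Hom (Vn_cat C Z n) (Un_o n X) (Un_o n X')"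
  obtain A hA vA A' hA' vA' where XX': "X = (A, hA, vA)" "X' = (A', hA', vA')"
    by (cases X, cases X') auto
  obtain f where "f \<in> Sn_hom C Z n (A, hA, vA) (A', hA', vA')" "Un_m n X X' f = g"
    by (rule Un_full) (use X X' g XX' in \<open>simp_all add: Sn_cat_def Vn_cat_def\<close>)
  then show "\<exists>f\<in>Hom (Sn_cat C Z n) X X'. Un_m n X X' f = g"
    using XX' by (auto simp: Sn_cat_def)
next
  fix X X' f f'
  assume "X \<in> Ob (Sn_cat C Z n)" "X' \<in> Ob (Sn_cat C Z n)"
    and "f \<in> Hom (Sn_cat C Z n) X X'" "f' \<in> Hom (Sn_cat C Z n) X X'"
    and eq: "Un_m n X X' f = Un_m n X X' f'"
  moreover obtain A hA vA A' hA' vA' where "X = (A, hA, vA)" "X' = (A', hA', vA')"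
    by (cases X, cases X') auto
  ultimately show "f = f'"
    by (intro Un_faithful[OF _ _ _ _ eq]) (simp_all add: Sn_cat_def)
qed (fact Un_functor |
     erule Sn_cat_Id_Hom Sn_cat_Cmp_Hom Vn_cat_Id_Hom Vn_cat_Id_left Vn_cat_Id_right; assumption)+

end

theorem lemma3p26:
  fixes C :: "('o, 'h, 'v) dbl" and Z :: 'o and n :: nat
  assumes "isostable C Z"
  shows "is_equivalence (Sn_cat C Z n) (Vn_cat C Z n) (Un_o n) (Un_m n)"
proof -
  obtain to tm u where "isostable_squares C Z to tm u"
    using assms by (rule isostable_squares_exists)
  then interpret isostable_squares C Z to tm u .
  show ?thesis
    using fully_faithful_surjective.equivalence[OF Un_fully_faithful_surjective] .
qed

end
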